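(* Assume the setting below and let $J^\perp\in\mathbb{R}^{n\times n}$ be the random matrix $J^\perp_{ij}=\int_\mathcal{X}k^\perp(X_i,x)k^\perp(X_j,x)\,d\mu(x)$. If the smallest eigenvalue of $J^\perp$ is at least $c$ almost surely, then \[\mathbb{E}[R[f]-R[f']]\ge\frac{\|f^\star\|_\mu^2c+\sigma^2\|k^\perp\|^2_{L_2(\mu\otimes\mu)}}{(\sqrt nM_k+\rho/\sqrt n)^2}.\]
   Context: Setting: $\mathcal{G}$ is a compact, second countable, Hausdorff topological group with Haar probability measure $\lambda$, acting measurably on a nonempty Polish space $\mathcal{X}$; $\mu$ is a $\mathcal{G}$-invariant Borel probability measure on $\mathcal{X}$ with $\mathrm{supp}\,\mu=\mathcal{X}$. $k$ is a measurable symmetric positive definite kernel with RKHS $\mathcal{H}$, $k(\cdot,x)$ continuous for all $x$, $M_k=\sup_xk(x,x)<\infty$; $\iota:\mathcal{H}\to L_2(\mu)$ the inclusion; $\mathcal{O}h(x)=\int_\mathcal{G}h(gx)d\lambda(g)$; $k^\perp(x,y)=k(x,y)-\int_\mathcal{G}k(x,gy)d\lambda(g)$; $\|j\|^2_{L_2(\mu\otimes\mu)}=\iint j(x,y)^2d\mu(x)d\mu(y)$. The training sample $(X_i,Y_i)_{i=1}^n$ is i.i.d. with $X_i\sim\mu$, $Y_i=f^\star(X_i)+\xi_i$, $f^\star\in L_2(\mu)$ $\mathcal{G}$-invariant, $\mathbb{E}[\xi_i\mid X_1,\dots,X_n]=0$, $\mathbb{E}[\xi_i\xi_j\mid X_1,\dots,X_n]=\sigma^2\delta_{ij}<\infty$;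 $X\sim\mu$, $Y=f^\star(X)+\xi$ with $\mathbb{E}[\xi\mid X]=0$, $\mathbb{E}[\xi^2]=\sigma^2$. For $\rho>0$, $f(x)=k_{\mathbf{X}}(x)^\top(K+\rho I)^{-1}\mathbf{Y}$ is the kernel ridge regression solution ($K_{ij}=k(X_i,X_j)$, $k_{\mathbf{X}}(x)_i=k(X_i,x)$, $\mathbf{Y}_i=Y_i$), $\bar f=\mathcal{O}\iota f$, and $f'\in L_2(\mu)$ is any predictor with $R[f']\le R[\bar f]$, where $R[h]=\mathbb{E}[(h(X)-Y)^2]$ conditional on the training sample; the outer expectation is over the training sample. $\|\cdot\|_\mu$ is the $L_2(\mu)$ norm. *)

theory Defs
  imports "HOL-Probability.Probability"
begin

definition compact_topological_group ::
  "('g::{second_countable_topology,t2_space} \<Rightarrow> 'g \<Rightarrow> 'g) \<Rightarrow> 'g \<Rightarrow> ('g \<Rightarrow> 'g) \<Rightarrow> bool" where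
  "compact_topological_group gmul e ginv \<longleftrightarrow>
     (\<forall>a b c. gmul (gmul a b) c = gmul a (gmul b c)) \<and>
     (\<forall>a. gmul e a = a \<and> gmul a e = a) \<and>
     (\<forall>a. gmul (ginv a) a = e \<and> gmul a (ginv a) = e) \<and>
     continuous_on UNIV (\<lambda>p. gmul (fst p) (snd p)) \<and>
     continuous_on UNIV ginv \<and>
     compact (UNIV :: 'g set)"

definition haar_probability :: "'g::topological_space measure \<Rightarrow> ('g \<Rightarrow> 'g \<Rightarrow> 'g) \<Rightarrow> bool" where
  "haar_probability lam gmul \<longleftrightarrow>
     sets lam = sets borel \<and> prob_space lam \<and>
     (\<forall>g. \<forall>A\<in>sets borel. emeasure lam ((gmul g) ` A) = emeasure lam A)"

definition measurable_group_action ::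
  "('g::topological_space \<Rightarrow> 'g \<Rightarrow> 'g) \<Rightarrow> 'g \<Rightarrow> ('g \<Rightarrow> 'x::topological_space \<Rightarrow> 'x) \<Rightarrow> bool" where
  "measurable_group_action gmul e act \<longleftrightarrow>
     (\<forall>x. act e x = x) \<and> (\<forall>g h x. act (gmul g h) x = act g (act h x)) \<and>
     (\<lambda>p. act (fst p) (snd p)) \<in> measurable (borel \<Otimes>\<^sub>M borel) borel"

definition pd_kernel :: "('x::topological_space \<Rightarrow> 'x \<Rightarrow> real) \<Rightarrow> bool" where
  "pd_kernel k \<longleftrightarrow>
     (\<lambda>p. k (fst p) (snd p)) \<in> borel_measurable (borel \<Otimes>\<^sub>M borel) \<and>
     (\<forall>x y. k x y = k y x) \<and>
     (\<forall>(xs :: 'x list) (a :: nat \<Rightarrow> real).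
        (\<Sum>i<length xs. \<Sum>j<length xs. a i * a j * k (xs ! i) (xs ! j)) \<ge> 0)"

definition avg_op :: "'g measure \<Rightarrow> ('g \<Rightarrow> 'x \<Rightarrow> 'x) \<Rightarrow> ('x \<Rightarrow> real) \<Rightarrow> 'x \<Rightarrow> real" where
  "avg_op lam act h x = (\<integral>g. h (act g x) \<partial>lam)"

definition kperp :: "'g measure \<Rightarrow> ('g \<Rightarrow> 'x \<Rightarrow> 'x) \<Rightarrow> ('x \<Rightarrow> 'x \<Rightarrow> real) \<Rightarrow> 'x \<Rightarrow> 'x \<Rightarrow> real" where
  "kperp lam act k x y = k x y - (\<integral>g. k x (act g y) \<partial>lam)"

definition mat_eigenvalue :: "real^'n^'n \<Rightarrow> real \<Rightarrow> bool" where
  "mat_eigenvalue A lam_ev \<longleftrightarrow> (\<exists>v. v \<noteq> 0 \<and> A *v v = lam_ev *\<^sub>R v)"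

definition krr :: "('x \<Rightarrow> 'x \<Rightarrow> real) \<Rightarrow> real \<Rightarrow> ('n::finite \<Rightarrow> 'x) \<Rightarrow> ('n \<Rightarrow> real) \<Rightarrow> 'x \<Rightarrow> real" where
  "krr k rho Xs Ys x =
     (\<chi> i. k (Xs i) x) \<bullet>
       (matrix_inv ((\<chi> i j. k (Xs i) (Xs j)) + rho *\<^sub>R mat 1) *v (\<chi> i. Ys i))"

text \<open>Risk R[h] = E[(h(X) - Y)^2] with test pair X ~ mu, Y = fstar X + xi, on its own
  probability space Q (hence independent of the training sample).\<close>
definition risk :: "'t measure \<Rightarrow> ('t \<Rightarrow> 'x) \<Rightarrow> ('t \<Rightarrow> real) \<Rightarrow> ('x \<Rightarrow> real) \<Rightarrow> ('x \<Rightarrow> real) \<Rightarrow> real" where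
  "risk Q Xt xit fstar h = (\<integral>t. (h (Xt t) - (fstar (Xt t) + xit t))\<^sup>2 \<partial>Q)"

end

theory Submission
  imports Defs
begin

(* Averaging over the group is the orthogonal projection of L2(mu) onto the invariant functions.
   Hence, for an invariant target, R[f] - R[f'] >= R[f] - R[O f] = ||f - O f||^2.  For the kernel ridge predictor f = k_X . C^-1 Y with C = K + rho I we have
   f - O f = k^perp_X . C^-1 Y, so the gain is the quadratic form of C^-1 J C^-1 in Y, where J is
   the Gram matrix of the functions k^perp(X_i, .).  Writing Y = f*(X) + xi, the conditionally
   centred and uncorrelated noise contributes sigma^2 tr (C^-1 J C^-1) >= sigma^2 tr J / ||C||^2,
   and the signal part is at least c |f*(X)|^2 / ||C||^2 by the eigenvalue bound on J.  Finally
   ||C|| <= n M_k + rho, E |f*(X)|^2 = n ||f*||^2 and E tr J = n ||k^perp||^2. *)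

section \<open>Matrices and quadratic forms\<close>

lemma inner_matrix_vector_mult_eq_sum:
  "(u::real^'n) \<bullet> (A *v v) = (\<Sum>i\<in>UNIV. \<Sum>j\<in>UNIV. u$i * v$j * A$i$j)"
  by (simp add: inner_vec_def matrix_vector_mult_def sum_distrib_left mult_ac)

lemma inner_congruence:
  fixes C J :: "real^'n^'n"
  shows "(C *v u) \<bullet> (J *v (C *v u)) = u \<bullet> ((transpose C ** J ** C) *v u)"
  by (metis dot_lmul_matrix matrix_vector_mul_assoc vector_transpose_matrix)

lemma norm_matrix_vector_mult_le:
  fixes K :: "real^'n^'n"
  assumes bnd: "\<And>i j. \<bar>K$i$j\<bar> \<le> M"
  shows "norm (K *v u) \<le> real CARD('n) * M * norm u"
proof -
  have M0: "M \<ge> 0" using bnd[of undefined undefined] by linarith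
  have row: "(K$i \<bullet> u)^2 \<le> real CARD('n) * M^2 * norm u ^ 2" for i
  proof -
    have "norm (K$i) ^ 2 = (\<Sum>j\<in>UNIV. (K$i$j)^2)"
      by (simp only: power2_norm_eq_inner) (simp add: inner_vec_def power2_eq_square)
    also have "\<dots> \<le> (\<Sum>j\<in>(UNIV::'n set). M^2)"
      using bnd by (intro sum_mono) (metis abs_le_square_iff abs_of_nonneg M0)
    finally have "norm (K$i) ^ 2 \<le> real CARD('n) * M^2" by simp
    moreover have "(K$i \<bullet> u)^2 \<le> norm (K$i) ^ 2 * norm u ^ 2"
      by (metis Cauchy_Schwarz_ineq2 abs_ge_zero power2_abs power_mono power_mult_distrib)
    ultimately show ?thesis by (meson mult_right_mono order_trans zero_le_power2)
  qed
  have "norm (K *v u) ^ 2 = (\<Sum>i\<in>UNIV. ((K *v u)$i)^2)"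
    by (simp only: power2_norm_eq_inner) (simp add: inner_vec_def power2_eq_square)
  also have "\<dots> = (\<Sum>i\<in>UNIV. (K$i \<bullet> u)^2)"
    by (simp add: matrix_vector_mul_component)
  also have "\<dots> \<le> (\<Sum>i\<in>(UNIV::'n set). real CARD('n) * M^2 * norm u ^ 2)"
    by (rule sum_mono[OF row])
  also have "\<dots> = (real CARD('n) * M * norm u)^2"
    by (simp add: power_mult_distrib power2_eq_square)
  finally show ?thesis
    by (rule power2_le_imp_le) (simp add: M0)
qed

lemma norm_ridge_matrix_vector_mult_ge:
  fixes K :: "real^'n^'n"
  assumes psd: "\<And>u. u \<bullet> (K *v u) \<ge> 0"
  shows "rho * norm u \<le> norm ((K + rho *\<^sub>R mat 1) *v u)"
proof -
  have "rho * norm u ^ 2 \<le> u \<bullet> ((K + rho *\<^sub>R mat 1) *v u)"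
    using psd[of u]
    by (simp add: matrix_vector_mult_add_rdistrib flip: scaleR_matrix_vector_assoc)
       (simp add: power2_norm_eq_inner inner_add_right)
  also have "\<dots> \<le> norm u * norm ((K + rho *\<^sub>R mat 1) *v u)"
    using Cauchy_Schwarz_ineq2 abs_le_D1 by blast
  finally show ?thesis
    by (cases "norm u = 0") (auto simp: power2_eq_square mult_ac)
qed

lemma invertible_if_norm_ge:
  fixes C :: "real^'n^'n"
  assumes "rho > 0" and lo: "\<And>u. rho * norm u \<le> norm (C *v u)"
  shows "invertible C"
proof -
  have "inj ((*v) C)"
  proof (rule injI)
    fix x y assume "C *v x = C *v y"
    then have "rho * norm (x - y) \<le> 0"
      using lo[of "x - y"] by (simp add: matrix_vector_mult_diff_distrib)
    then show "x = y" using \<open>rho > 0\<close> by (simp add: mult_le_0_iff)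
  qed
  then show ?thesis
    by (simp add: invertible_left_inverse matrix_left_invertible_injective)
qed

lemma matrix_inv_right:
  fixes A :: "'a::semiring_1^'n^'m"
  assumes "invertible A"
  shows "A ** matrix_inv A = mat 1"
  using someI_ex[OF assms[unfolded invertible_def]] by (auto simp: matrix_inv_def)

lemma matrix_vector_mult_matrix_inv:
  fixes A :: "real^'n^'n"
  assumes "invertible A"
  shows "A *v (matrix_inv A *v u) = u"
  by (simp add: matrix_vector_mul_assoc matrix_inv_right[OF assms])

lemma transpose_matrix_inv_symmetric:
  fixes A :: "real^'n^'n"
  assumes "invertible A" and "transpose A = A"
  shows "transpose (matrix_inv A) = matrix_inv A"
proof -
  have "transpose (matrix_inv A) ** A = mat 1"
    using arg_cong[OF matrix_inv_right[OF assms(1)], of transpose] assms(2)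
    by (simp add: matrix_transpose_mul)
  then have "transpose (matrix_inv A) = transpose (matrix_inv A) ** (A ** matrix_inv A)"
    by (simp add: matrix_inv_right[OF assms(1)])
  also have "\<dots> = matrix_inv A"
    by (simp add: matrix_mul_assoc \<open>transpose (matrix_inv A) ** A = mat 1\<close>)
  finally show ?thesis .
qed

lemma congruence_entry:
  fixes A G :: "real^'n^'n"
  shows "(transpose A ** G ** A) $ a $ b = (\<Sum>j\<in>UNIV. \<Sum>i\<in>UNIV. A$i$a * G$i$j * A$j$b)"
  by (simp add: matrix_matrix_mult_def transpose_def sum_distrib_right)

lemma abs_congruence_entry_le:
  fixes A G :: "real^'n^'n"
  assumes A: "\<And>i j. \<bar>A$i$j\<bar> \<le> \<alpha>" and G: "\<And>i j. \<bar>G$i$j\<bar> \<le> \<beta>"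
  shows "\<bar>(transpose A ** G ** A) $ a $ b\<bar> \<le> (real CARD('n))\<^sup>2 * (\<alpha> * \<beta> * \<alpha>)"
proof -
  have "\<alpha> \<ge> 0" "\<beta> \<ge> 0"
    using A[of undefined undefined] G[of undefined undefined] by linarith+
  have "\<bar>(transpose A ** G ** A) $ a $ b\<bar> \<le> (\<Sum>j\<in>UNIV. \<Sum>i\<in>UNIV. \<bar>A$i$a * G$i$j * A$j$b\<bar>)"
    unfolding congruence_entry by (rule order_trans[OF sum_abs sum_mono[OF sum_abs]])
  also have "\<dots> \<le> (\<Sum>j\<in>(UNIV::'n set). \<Sum>i\<in>(UNIV::'n set). \<alpha> * \<beta> * \<alpha>)"
    unfolding abs_mult using \<open>\<alpha> \<ge> 0\<close> \<open>\<beta> \<ge> 0\<close>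
    by (intro sum_mono mult_mono A G) simp_all
  finally show ?thesis
    by (simp add: power2_eq_square)
qed

lemma borel_measurable_det:
  fixes A :: "'w \<Rightarrow> real^'n^'n"
  assumes [measurable]: "\<And>i j. (\<lambda>w. A w $ i $ j) \<in> borel_measurable M"
  shows "(\<lambda>w. det (A w)) \<in> borel_measurable M"
  unfolding det_def by measurable

lemma norm_le_matrix_inv:
  fixes A :: "real^'n^'n"
  assumes "invertible A" and up: "\<And>v. norm (A *v v) \<le> D * norm v"
  shows "norm u \<le> D * norm (matrix_inv A *v u)"
  using up[of "matrix_inv A *v u"] by (simp add: matrix_vector_mult_matrix_inv[OF assms(1)])

lemma abs_matrix_inv_entry_le:
  fixes A :: "real^'n^'n"
  assumes "invertible A" and "rho > 0" and lo: "\<And>v. rho * norm v \<le> norm (A *v v)"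
  shows "\<bar>matrix_inv A $ i $ j\<bar> \<le> 1 / rho"
proof -
  have "matrix_inv A $ i $ j = (matrix_inv A *v axis j 1) $ i"
    by (simp add: matrix_vector_mult_def axis_def if_distrib cong: if_cong)
  then have "\<bar>matrix_inv A $ i $ j\<bar> \<le> norm (matrix_inv A *v axis j 1)"
    by (metis component_le_norm_cart)
  moreover have "rho * norm (matrix_inv A *v axis j (1::real)) \<le> 1"
    using lo[of "matrix_inv A *v axis j 1"]
    by (simp add: matrix_vector_mult_matrix_inv[OF assms(1)] norm_axis_1)
  ultimately show ?thesis
    using \<open>rho > 0\<close> by (simp add: field_simps) (meson mult_left_mono less_imp_le order_trans)
qed

lemma matrix_inv_entry_cramer:
  fixes A :: "real^'n^'n"
  assumes "invertible A"
  shows "matrix_inv A $ i $ j = det (\<chi> a b. if b = i then (if a = j then 1 else 0) else A$a$b) / det A"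
proof -
  have "det A \<noteq> 0" using assms by (simp add: invertible_det_nz)
  from cramer[OF this] matrix_vector_mult_matrix_inv[OF assms, of "axis j 1"]
  have "matrix_inv A *v axis j 1 = (\<chi> k. det (\<chi> a b. if b = k then axis j 1 $ a else A$a$b) / det A)"
    by blast
  from arg_cong[OF this, of "\<lambda>v. v $ i"] show ?thesis
    by (simp add: matrix_vector_mult_def axis_def if_distrib cong: if_cong)
qed

lemma psd_quadratic_form_eq_0_imp_kernel:
  fixes A :: "real^'n^'n"
  assumes sym: "transpose A = A" and psd: "\<And>u. u \<bullet> (A *v u) \<ge> 0" and "v \<bullet> (A *v v) = 0"
  shows "A *v v = 0"
proof -
  define r where "r = A *v v"
  have "0 \<le> (v + t *\<^sub>R r) \<bullet> (A *v (v + t *\<^sub>R r))" for t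
    by (rule psd)
  also have "(v + t *\<^sub>R r) \<bullet> (A *v (v + t *\<^sub>R r)) = 2 * t * (r \<bullet> r) + t^2 * (r \<bullet> (A *v r))" for t
  proof -
    have "v \<bullet> (A *v r) = r \<bullet> r"
      by (metis dot_lmul_matrix inner_commute r_def sym vector_transpose_matrix)
    then show ?thesis
      using \<open>v \<bullet> (A *v v) = 0\<close>
      by (simp add: r_def matrix_vector_right_distrib matrix_vector_mult_scaleR inner_add_left
          inner_add_right inner_commute power2_eq_square algebra_simps)
  qed
  finally have t: "0 \<le> 2 * t * (r \<bullet> r) + t^2 * (r \<bullet> (A *v r))" for t .
  have "r \<bullet> r = 0"
  proof (rule ccontr)
    assume "r \<bullet> r \<noteq> 0"
    then have pos: "r \<bullet> r > 0" by (simp add: order_less_le)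
    define b where "b = r \<bullet> (A *v r)"
    define t where "t = - (r \<bullet> r) / (b + 1)"
    have "b \<ge> 0" unfolding b_def by (rule psd)
    then have st: "(b + 1) * t = - (r \<bullet> r)" by (simp add: t_def)
    have "0 \<le> (b + 1)^2 * (2 * t * (r \<bullet> r) + t^2 * b)"
      using t[of t] by (simp add: b_def)
    also have "\<dots> = 2 * (r \<bullet> r) * (b + 1) * ((b + 1) * t) + ((b + 1) * t)^2 * b"
      by (simp add: power2_eq_square algebra_simps)
    also have "\<dots> = - ((r \<bullet> r)^2 * (b + 2))"
      unfolding st by (simp add: power2_eq_square algebra_simps)
    also have "\<dots> < 0" using pos \<open>b \<ge> 0\<close> by simp
    finally show False by simp
  qed
  then show ?thesis by (simp add: r_def)
qed

lemma quadratic_form_attains_min_on_sphere: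
  fixes J :: "real^'n^'n"
  obtains u0 where "norm u0 = 1" and "\<And>v. (u0 \<bullet> (J *v u0)) * norm v ^ 2 \<le> v \<bullet> (J *v v)"
proof -
  define q where "q v = v \<bullet> (J *v v)" for v :: "real^'n"
  have "continuous_on (sphere 0 1) q"
    unfolding q_def by (intro continuous_intros linear_continuous_on) auto
  moreover have "axis undefined 1 \<in> sphere (0::real^'n) 1"
    by (simp add: norm_axis_1)
  ultimately obtain u0 where u0: "u0 \<in> sphere 0 1" and min: "\<And>v. v \<in> sphere 0 1 \<Longrightarrow> q u0 \<le> q v"
    using continuous_attains_inf[OF compact_sphere] by blast
  have "q u0 * norm v ^ 2 \<le> q v" for v
  proof (cases "v = 0")
    case False
    then have "q u0 \<le> q ((1 / norm v) *\<^sub>R v)"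
      by (intro min) simp
    also have "\<dots> = q v / norm v ^ 2"
      by (simp add: q_def matrix_vector_mult_scaleR power2_eq_square field_simps)
    finally show ?thesis
      using False by (simp add: field_simps)
  qed (simp add: q_def)
  with u0 show ?thesis
    by (intro that[of u0]) (simp_all add: q_def)
qed

lemma quadratic_form_ge_eigenvalue_bound:
  fixes J :: "real^'n^'n"
  assumes sym: "transpose J = J" and eig: "\<And>ev. mat_eigenvalue J ev \<Longrightarrow> c \<le> ev"
  shows "c * norm u ^ 2 \<le> u \<bullet> (J *v u)"
proof -
  obtain u0 where u0: "norm u0 = 1" and lb: "\<And>v. (u0 \<bullet> (J *v u0)) * norm v ^ 2 \<le> v \<bullet> (J *v v)"
    using quadratic_form_attains_min_on_sphere[of J] by blast
  define m where "m = u0 \<bullet> (J *v u0)"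
  define A where "A = J - m *\<^sub>R mat 1"
  have A_form: "v \<bullet> (A *v v) = v \<bullet> (J *v v) - m * norm v ^ 2" for v
    by (simp add: A_def matrix_vector_mult_diff_rdistrib inner_diff_right power2_norm_eq_inner
        flip: scaleR_matrix_vector_assoc)
  have "A *v u0 = 0"
  proof (rule psd_quadratic_form_eq_0_imp_kernel)
    show "transpose A = A"
      using sym by (simp add: A_def transpose_def mat_def vec_eq_iff)
    show "0 \<le> v \<bullet> (A *v v)" for v
      using lb[of v] by (simp add: A_form m_def)
    show "u0 \<bullet> (A *v u0) = 0"
      using u0 by (simp add: A_form m_def)
  qed
  then have "J *v u0 = m *\<^sub>R u0"
    by (simp add: A_def matrix_vector_mult_diff_rdistrib flip: scaleR_matrix_vector_assoc)
  moreover have "u0 \<noteq> 0"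
    using u0 by auto
  ultimately have "c \<le> m"
    by (intro eig) (auto simp: mat_eigenvalue_def)
  then have "c * norm u ^ 2 \<le> m * norm u ^ 2"
    by (simp add: mult_right_mono)
  with lb[of u] show ?thesis
    by (simp add: m_def)
qed

section \<open>Gram matrices\<close>

lemma norm_power2_vec: "norm (v::real^'n) ^ 2 = (\<Sum>i\<in>UNIV. (v$i)^2)"
  by (simp only: power2_norm_eq_inner) (simp add: inner_vec_def power2_eq_square)

lemma matrix_diagonal_entry_eq_inner: "(A::real^'n^'n) $ a $ a = axis a 1 \<bullet> (A *v axis a 1)"
  by (simp add: inner_vec_def matrix_vector_mult_def axis_def if_distrib if_distribR cong: if_cong)

definition gram_matrix :: "'x measure \<Rightarrow> ('x \<Rightarrow> real^'n) \<Rightarrow> real^'n^'n" where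
  "gram_matrix M \<phi> = (\<chi> i j. \<integral>x. \<phi> x $ i * \<phi> x $ j \<partial>M)"

lemma transpose_gram_matrix: "transpose (gram_matrix M \<phi>) = gram_matrix M \<phi>"
  by (simp add: gram_matrix_def transpose_def mult.commute)

context
  fixes M :: "'x measure" and \<phi> :: "'x \<Rightarrow> real^'n"
  assumes gram_integrable: "\<And>i j. integrable M (\<lambda>x. \<phi> x $ i * \<phi> x $ j)"
begin

lemma inner_power2_eq_sum:
  "(u \<bullet> \<phi> x)^2 = (\<Sum>i\<in>UNIV. \<Sum>j\<in>UNIV. u$i * u$j * (\<phi> x $ i * \<phi> x $ j))"
  by (simp add: inner_vec_def power2_eq_square sum_product mult_ac)

lemma integrable_inner_power2: "integrable M (\<lambda>x. (u \<bullet> \<phi> x)^2)"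
  unfolding inner_power2_eq_sum using gram_integrable by simp

lemma gram_matrix_quadratic_form:
  "u \<bullet> (gram_matrix M \<phi> *v u) = (\<integral>x. (u \<bullet> \<phi> x)^2 \<partial>M)"
  unfolding inner_power2_eq_sum inner_matrix_vector_mult_eq_sum
  using gram_integrable by (simp add: gram_matrix_def)

lemma gram_matrix_psd: "u \<bullet> (gram_matrix M \<phi> *v u) \<ge> 0"
  unfolding gram_matrix_quadratic_form by simp

lemma trace_gram_matrix: "trace (gram_matrix M \<phi>) = (\<integral>x. norm (\<phi> x) ^ 2 \<partial>M)"
  unfolding norm_power2_vec using gram_integrable
  by (simp add: trace_def gram_matrix_def power2_eq_square)

lemma trace_congruence_gram_matrix_ge:
  fixes C :: "real^'n^'n"
  assumes "D > 0" and lo: "\<And>v. norm v \<le> D * norm (transpose C *v v)"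
  shows "trace (gram_matrix M \<phi>) / D^2 \<le> trace (transpose C ** gram_matrix M \<phi> ** C)"
proof -
  have column: "(C *v axis a 1) \<bullet> v = (transpose C *v v) $ a" for a v
    by (simp add: inner_vec_def matrix_vector_mult_def transpose_def axis_def if_distrib mult.commute
        cong: if_cong)
  have integrable_sq: "integrable M (\<lambda>x. norm (\<phi> x) ^ 2)"
    using integrable_inner_power2[of "axis _ 1"] by (simp add: norm_power2_vec inner_axis')
  have "trace (gram_matrix M \<phi>) / D^2 = (\<integral>x. norm (\<phi> x) ^ 2 / D^2 \<partial>M)"
    by (simp add: trace_gram_matrix)
  also have "\<dots> \<le> (\<integral>x. norm (transpose C *v \<phi> x) ^ 2 \<partial>M)"
  proof (rule integral_mono)
    show "integrable M (\<lambda>x. norm (transpose C *v \<phi> x) ^ 2)"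
      unfolding norm_power2_vec column[symmetric]
      by (intro Bochner_Integration.integrable_sum integrable_inner_power2)
    show "norm (\<phi> x) ^ 2 / D^2 \<le> norm (transpose C *v \<phi> x) ^ 2" for x
      using power_mono[OF lo[of "\<phi> x"], of 2] \<open>D > 0\<close>
      by (simp add: field_simps power_mult_distrib)
  qed (use integrable_sq in simp)
  also have "\<dots> = (\<Sum>a\<in>UNIV. \<integral>x. ((C *v axis a 1) \<bullet> \<phi> x)^2 \<partial>M)"
    unfolding norm_power2_vec column[symmetric]
    by (intro Bochner_Integration.integral_sum integrable_inner_power2)
  also have "\<dots> = (\<Sum>a\<in>UNIV. (C *v axis a 1) \<bullet> (gram_matrix M \<phi> *v (C *v axis a 1)))"
    by (simp only: gram_matrix_quadratic_form)
  also have "\<dots> = trace (transpose C ** gram_matrix M \<phi> ** C)"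
    unfolding trace_def inner_congruence by (simp only: matrix_diagonal_entry_eq_inner)
  finally show ?thesis .
qed

end

lemma pd_kernel_gram_psd:
  fixes xv :: "'n::finite \<Rightarrow> 'x::topological_space" and u :: "real^'n"
  assumes "pd_kernel k"
  shows "u \<bullet> ((\<chi> i j. k (xv i) (xv j)) *v u) \<ge> 0"
proof -
  obtain ls where ls: "set ls = (UNIV::'n set)" "distinct ls"
    using finite_distinct_list[OF finite_class.finite_UNIV] by blast
  then have bij: "bij_betw (nth ls) {..<length ls} UNIV"
    using bij_betw_nth by fastforce
  have "\<forall>(xs :: 'x list) (a :: nat \<Rightarrow> real).
      0 \<le> (\<Sum>i<length xs. \<Sum>j<length xs. a i * a j * k (xs ! i) (xs ! j))"
    using assms unfolding pd_kernel_def by blast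
  from this[rule_format, of "\<lambda>m. u $ (ls ! m)" "map xv ls"]
  have "0 \<le> (\<Sum>m<length (map xv ls). \<Sum>m'<length (map xv ls).
      u $ (ls ! m) * u $ (ls ! m') * k (map xv ls ! m) (map xv ls ! m'))" .
  also have "\<dots> = (\<Sum>m<length ls. \<Sum>m'<length ls. u $ (ls ! m) * u $ (ls ! m') * k (xv (ls ! m)) (xv (ls ! m')))"
    by simp
  also have "\<dots> = (\<Sum>i\<in>UNIV. \<Sum>j\<in>UNIV. u$i * u$j * k (xv i) (xv j))"
    using sum.reindex_bij_betw[OF bij, of "\<lambda>i. \<Sum>j\<in>UNIV. u$i * u$j * k (xv i) (xv j)"]
      sum.reindex_bij_betw[OF bij, of "\<lambda>j. u$_ * u$j * k (xv _) (xv j)"]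
    by simp
  finally show ?thesis
    by (simp add: inner_matrix_vector_mult_eq_sum)
qed

section \<open>Square integrable functions\<close>

lemma abs_mult_le_sum_squares: "\<bar>(a::real) * b\<bar> \<le> a\<^sup>2 + b\<^sup>2"
proof -
  have "2 * \<bar>a * b\<bar> \<le> a\<^sup>2 + b\<^sup>2"
    using zero_le_square[of "\<bar>a\<bar> - \<bar>b\<bar>"] by (simp add: power2_eq_square algebra_simps abs_mult)
  then show ?thesis by simp
qed

lemma integrable_bounded_mult:
  fixes c g :: "'a \<Rightarrow> real"
  assumes "c \<in> borel_measurable M" and c_bound: "\<And>x. \<bar>c x\<bar> \<le> B" and "integrable M g"
  shows "integrable M (\<lambda>x. c x * g x)"
proof (rule Bochner_Integration.integrable_bound)
  show "integrable M (\<lambda>x. B * g x)"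
    using assms by simp
  have "B \<ge> 0"
    using c_bound[of undefined] by linarith
  then show "AE x in M. norm (c x * g x) \<le> norm (B * g x)"
    using c_bound by (auto simp: abs_mult intro!: mult_right_mono)
qed (use assms in simp)

lemma integrable_bounded_times_product:
  fixes b p q :: "'w \<Rightarrow> real"
  assumes [measurable]: "b \<in> borel_measurable M" "p \<in> borel_measurable M" "q \<in> borel_measurable M"
    and b_bound: "\<And>w. \<bar>b w\<bar> \<le> Bd"
    and "integrable M (\<lambda>w. (p w)\<^sup>2)" "integrable M (\<lambda>w. (q w)\<^sup>2)"
  shows "integrable M (\<lambda>w. b w * (p w * q w))"
proof (rule Bochner_Integration.integrable_bound)
  show "integrable M (\<lambda>w. Bd * ((p w)\<^sup>2 + (q w)\<^sup>2))"
    using assms by simp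
  have "Bd \<ge> 0"
    using b_bound[of undefined] by linarith
  then show "AE w in M. norm (b w * (p w * q w)) \<le> norm (Bd * ((p w)\<^sup>2 + (q w)\<^sup>2))"
    by (intro AE_I2) (simp add: abs_mult mult_mono b_bound abs_mult_le_sum_squares[simplified abs_mult])
qed simp

lemma (in prob_space) integrable_bounded_minus_square:
  fixes h g :: "'a \<Rightarrow> real"
  assumes [measurable]: "h \<in> borel_measurable M" "g \<in> borel_measurable M"
    and h_bound: "\<And>x. \<bar>h x\<bar> \<le> B" and "integrable M (\<lambda>x. (g x)\<^sup>2)"
  shows "integrable M (\<lambda>x. (h x - g x)\<^sup>2)"
proof (rule Bochner_Integration.integrable_bound)
  show "integrable M (\<lambda>x. 2 * B\<^sup>2 + 2 * (g x)\<^sup>2)"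
    using assms by simp
  have "(h x - g x)\<^sup>2 \<le> 2 * B\<^sup>2 + 2 * (g x)\<^sup>2" for x
  proof -
    have "(h x)\<^sup>2 \<le> B\<^sup>2"
      using power_mono[OF h_bound[of x] abs_ge_zero, of 2] by simp
    moreover have "0 \<le> (h x + g x)\<^sup>2" by simp
    ultimately show ?thesis
      by (simp add: power2_eq_square algebra_simps)
  qed
  then show "AE x in M. norm ((h x - g x)\<^sup>2) \<le> norm (2 * B\<^sup>2 + 2 * (g x)\<^sup>2)"
    by simp
qed simp

lemma (in prob_space) abs_integral_le_bound:
  fixes f :: "'a \<Rightarrow> real"
  assumes "f \<in> borel_measurable M" and f_bound: "\<And>x. \<bar>f x\<bar> \<le> B"
  shows "integrable M f" and "\<bar>\<integral>x. f x \<partial>M\<bar> \<le> B"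
proof -
  show int: "integrable M f"
    using assms by (intro integrable_const_bound[where B=B]) auto
  have "\<bar>\<integral>x. f x \<partial>M\<bar> \<le> (\<integral>x. \<bar>f x\<bar> \<partial>M)"
    by (rule integral_abs_bound)
  also have "\<dots> \<le> (\<integral>x. B \<partial>M)"
    using int f_bound by (intro integral_mono) auto
  finally show "\<bar>\<integral>x. f x \<partial>M\<bar> \<le> B"
    using prob_space by simp
qed

lemma integrable_power2_add:
  fixes p q :: "'a \<Rightarrow> real"
  assumes [measurable]: "p \<in> borel_measurable M" "q \<in> borel_measurable M"
    and "integrable M (\<lambda>x. (p x)\<^sup>2)" "integrable M (\<lambda>x. (q x)\<^sup>2)"
  shows "integrable M (\<lambda>x. (p x + q x)\<^sup>2)"
proof -
  have "integrable M (\<lambda>x. 1 * (p x * q x))"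
    using assms by (intro integrable_bounded_times_product[where Bd=1]) simp_all
  then show ?thesis
    using assms by (simp add: power2_sum mult.assoc)
qed

lemma (in prob_space) sigma_finite_subalgebra_vimage_algebra:
  assumes "Z \<in> measurable M N"
  shows "sigma_finite_subalgebra M (vimage_algebra (space M) Z N)"
proof (rule finite_measure_subalgebra_is_sigma_finite)
  have "subalgebra M (vimage_algebra (space M) Z N)"
    unfolding subalgebra_def using sets_image_in_sets[OF refl assms] by simp
  then show "finite_measure_subalgebra M (vimage_algebra (space M) Z N)"
    by (simp add: finite_measure_subalgebra_def finite_measure_subalgebra_axioms_def finite_measure_axioms)
qed

lemma (in sigma_finite_subalgebra) integral_mult_cond_exp_const:
  assumes "g \<in> borel_measurable F" "f \<in> borel_measurable M" "integrable M (\<lambda>x. g x * f x)"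
    and "AE x in M. real_cond_exp M F f x = c"
  shows "(\<integral>x. g x * f x \<partial>M) = c * (\<integral>x. g x \<partial>M)"
proof -
  have [measurable]: "g \<in> borel_measurable M"
    using measurable_from_subalg[OF subalg assms(1)] .
  have "(\<integral>x. g x * f x \<partial>M) = (\<integral>x. g x * real_cond_exp M F f x \<partial>M)"
    using real_cond_exp_intg(2)[OF assms(3,1,2)] by simp
  also have "\<dots> = (\<integral>x. c * g x \<partial>M)"
    using assms(4) by (intro integral_cong_AE) (auto simp: mult.commute)
  finally show ?thesis
    by simp
qed

section \<open>Haar measure\<close>

locale compact_haar_group =
  fixes gmul :: "'g::{second_countable_topology,t2_space} \<Rightarrow> 'g \<Rightarrow> 'g" and e :: 'g
    and ginv :: "'g \<Rightarrow> 'g" and lam :: "'g measure"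
  assumes group: "compact_topological_group gmul e ginv"
    and haar: "haar_probability lam gmul"
begin

lemma assoc: "gmul (gmul a b) c = gmul a (gmul b c)"
  and left_neutral: "gmul e a = a"
  and left_inverse: "gmul (ginv a) a = e" and right_inverse: "gmul a (ginv a) = e"
  using group by (auto simp: compact_topological_group_def)

lemma inverse_mult_cancel: "gmul (ginv a) (gmul a b) = b"
  by (metis assoc left_inverse left_neutral)

lemma mult_inverse_cancel: "gmul a (gmul (ginv a) b) = b"
  by (metis assoc right_inverse left_neutral)

lemma inverse_inverse: "ginv (ginv a) = a"
  by (metis mult_inverse_cancel inverse_mult_cancel right_inverse left_inverse)

lemma inverse_mult: "ginv (gmul a b) = gmul (ginv b) (ginv a)"
  by (metis assoc inverse_mult_cancel mult_inverse_cancel right_inverse)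

lemma measurable_mult [measurable]:
  assumes "f \<in> measurable M borel" "g \<in> measurable M borel"
  shows "(\<lambda>x. gmul (f x) (g x)) \<in> measurable M borel"
proof -
  have "continuous_on UNIV (\<lambda>p. gmul (fst p) (snd p))"
    using group by (simp add: compact_topological_group_def)
  then have "(\<lambda>p. gmul (fst p) (snd p)) \<in> borel_measurable (borel \<Otimes>\<^sub>M borel)"
    unfolding borel_prod by (rule borel_measurable_continuous_onI)
  from measurable_compose[OF measurable_Pair[OF assms] this] show ?thesis by simp
qed

lemma measurable_inverse [measurable]:
  assumes "f \<in> measurable M borel"
  shows "(\<lambda>x. ginv (f x)) \<in> measurable M borel"
proof -
  have "continuous_on UNIV ginv"
    using group by (simp add: compact_topological_group_def)
  from measurable_compose[OF assms borel_measurable_continuous_onI[OF this]] show ?thesis .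
qed

lemma sets_lam [measurable_cong]: "sets lam = sets borel"
  using haar by (simp add: haar_probability_def)

lemma space_lam [simp]: "space lam = UNIV"
  using sets_eq_imp_space_eq[OF sets_lam] by simp

sublocale lam: prob_space lam
  using haar by (simp add: haar_probability_def)

lemma emeasure_mult_left_vimage:
  assumes "A \<in> sets borel"
  shows "emeasure lam (gmul a -` A) = emeasure lam A"
proof -
  have "gmul a -` A = gmul (ginv a) ` A"
    by (auto simp: image_def) (metis inverse_mult_cancel mult_inverse_cancel)+
  then show ?thesis
    using haar assms by (simp add: haar_probability_def)
qed

text \<open>A left-invariant probability measure is also inversion invariant: integrate the indicator of
  \<open>{(g, h). g h \<in> A}\<close> against \<open>nu \<Otimes> lam\<close>, \<open>nu\<close> the reflected measure, in both orders.\<close>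
lemma emeasure_inverse_vimage:
  assumes A: "A \<in> sets borel"
  shows "emeasure lam (ginv -` A) = emeasure lam A"
proof -
  define nu where "nu = distr lam borel ginv"
  have sets_nu [measurable_cong]: "sets nu = sets borel" and space_nu: "space nu = UNIV"
    by (simp_all add: nu_def)
  have emeasure_nu: "emeasure nu B = emeasure lam (ginv -` B)" if "B \<in> sets borel" for B
    using that by (simp add: nu_def emeasure_distr)
  interpret nu: prob_space nu
    unfolding nu_def by (rule lam.prob_space_distr) measurable
  interpret pair_sigma_finite nu lam ..
  define S where "S = (\<lambda>p. gmul (fst p) (snd p)) -` A"
  have S: "S \<in> sets (nu \<Otimes>\<^sub>M lam)"
    using measurable_sets[of "\<lambda>p. gmul (fst p) (snd p)" "nu \<Otimes>\<^sub>M lam" borel A] A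
    by (simp add: S_def space_pair_measure space_nu)
  have "emeasure (nu \<Otimes>\<^sub>M lam) S = (\<integral>\<^sup>+ g. emeasure lam (Pair g -` S) \<partial>nu)"
    by (rule lam.emeasure_pair_measure_alt[OF S])
  also have "\<dots> = (\<integral>\<^sup>+ g. emeasure lam A \<partial>nu)"
    using emeasure_mult_left_vimage[OF A] by (simp add: S_def vimage_def)
  finally have "emeasure (nu \<Otimes>\<^sub>M lam) S = emeasure lam A"
    by (simp add: nu.emeasure_space_1)
  moreover have "emeasure (nu \<Otimes>\<^sub>M lam) S = (\<integral>\<^sup>+ h. emeasure nu ((\<lambda>g. (g, h)) -` S) \<partial>lam)"
    by (rule emeasure_pair_measure_alt2[OF S])
  moreover have "emeasure nu ((\<lambda>g. (g, h)) -` S) = emeasure nu A" for h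
  proof -
    have "(\<lambda>g. (g, h)) -` S = (\<lambda>g. gmul g h) -` A"
      by (auto simp: S_def)
    moreover have "ginv -` ((\<lambda>g. gmul g h) -` A) = gmul (ginv h) -` (ginv -` A)"
      by (auto simp: inverse_mult inverse_inverse)
    moreover have "(\<lambda>g. gmul g h) -` A \<in> sets borel" "ginv -` A \<in> sets borel"
      using measurable_sets[OF _ A, of "\<lambda>g. gmul g h" borel]
        measurable_sets[OF _ A, of ginv borel] by auto
    ultimately show ?thesis
      using A by (simp add: emeasure_nu emeasure_mult_left_vimage)
  qed
  ultimately show ?thesis
    using A lam.emeasure_space_1 by (simp add: emeasure_nu)
qed

lemma distr_mult_right: "distr lam borel (\<lambda>g. gmul g a) = lam"
proof (rule measure_eqI)
  fix A assume "A \<in> sets (distr lam borel (\<lambda>g. gmul g a))"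
  then have A: "A \<in> sets borel" by simp
  have "(\<lambda>g. gmul g a) -` A = ginv -` (gmul (ginv a) -` (ginv -` A))"
    by (auto simp: inverse_mult inverse_inverse)
  moreover have "gmul (ginv a) -` (ginv -` A) \<in> sets borel" "ginv -` A \<in> sets borel"
    using measurable_sets[OF _ A, of ginv borel]
      measurable_sets[OF _ A, of "\<lambda>g. ginv (gmul (ginv a) g)" borel] by (auto simp: vimage_def)
  ultimately show "emeasure (distr lam borel (\<lambda>g. gmul g a)) A = emeasure lam A"
    using A by (simp add: emeasure_distr emeasure_inverse_vimage emeasure_mult_left_vimage)
qed (simp add: sets_lam)

end

section \<open>Averaging over the group\<close>

locale invariant_kernel = compact_haar_group gmul e ginv lam
  for gmul :: "'g::{second_countable_topology,t2_space} \<Rightarrow> 'g \<Rightarrow> 'g" and e ginv lam +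
  fixes act :: "'g \<Rightarrow> 'x::topological_space \<Rightarrow> 'x" and mu :: "'x measure"
    and k :: "'x \<Rightarrow> 'x \<Rightarrow> real"
  assumes action: "measurable_group_action gmul e act"
    and sets_mu [measurable_cong]: "sets mu = sets borel" and mu_prob: "prob_space mu"
    and mu_invariant: "\<forall>g. \<forall>A\<in>sets borel. emeasure mu (act g -` A) = emeasure mu A"
    and kernel: "pd_kernel k"
    and kernel_diag_bdd: "bdd_above (range (\<lambda>x. k x x))"
begin

lemma space_mu [simp]: "space mu = UNIV"
  using sets_eq_imp_space_eq[OF sets_mu] by simp

sublocale mu: prob_space mu
  by (rule mu_prob)

sublocale mu_lam: pair_sigma_finite mu lam ..

lemma measurable_act [measurable]:
  assumes "f \<in> measurable M borel" "g \<in> measurable M borel"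
  shows "(\<lambda>w. act (f w) (g w)) \<in> measurable M borel"
proof -
  have "(\<lambda>p. act (fst p) (snd p)) \<in> measurable (borel \<Otimes>\<^sub>M borel) borel"
    using action by (simp add: measurable_group_action_def)
  from measurable_compose[OF measurable_Pair[OF assms] this] show ?thesis by simp
qed

lemma act_mult: "act (gmul g h) x = act g (act h x)"
  using action by (simp add: measurable_group_action_def)

lemma measurable_kernel [measurable]:
  assumes "f \<in> measurable M borel" "g \<in> measurable M borel"
  shows "(\<lambda>w. k (f w) (g w)) \<in> borel_measurable M"
proof -
  have "(\<lambda>p. k (fst p) (snd p)) \<in> borel_measurable (borel \<Otimes>\<^sub>M borel)"
    using kernel by (simp add: pd_kernel_def)
  from measurable_compose[OF measurable_Pair[OF assms] this] show ?thesis by simp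
qed

abbreviation kernel_bound :: real where
  "kernel_bound \<equiv> (SUP x. k x x)"

lemma abs_kernel_le: "\<bar>k x y\<bar> \<le> kernel_bound"
proof -
  have pd: "0 \<le> (\<Sum>i<length xs. \<Sum>j<length xs. a i * a j * k (xs ! i) (xs ! j))" for xs a
    using kernel by (simp add: pd_kernel_def)
  have "k y x = k x y"
    using kernel by (simp add: pd_kernel_def)
  then have "0 \<le> k x x + k y y + 2 * s * k x y" if "s = 1 \<or> s = -1" for s
    using pd[of "\<lambda>i. if i = 0 then 1 else s" "[x, y]"] that
    by (auto simp: algebra_simps)
  from this[of 1] this[of "-1"] have "\<bar>k x y\<bar> \<le> (k x x + k y y) / 2"
    by auto
  also have "\<dots> \<le> kernel_bound"
    using cSUP_upper[OF UNIV_I kernel_diag_bdd, of x] cSUP_upper[OF UNIV_I kernel_diag_bdd, of y]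
    by simp
  finally show ?thesis .
qed

lemma kernel_bound_nonneg: "kernel_bound \<ge> 0"
  using abs_kernel_le[of undefined undefined] by linarith

lemma distr_act: "distr mu borel (act g) = mu"
proof (rule measure_eqI)
  fix A assume "A \<in> sets (distr mu borel (act g))"
  then show "emeasure (distr mu borel (act g)) A = emeasure mu A"
    using mu_invariant by (simp add: emeasure_distr)
qed (simp add: sets_mu)

lemma measurable_avg_op [measurable]:
  assumes [measurable]: "h \<in> borel_measurable borel"
  shows "avg_op lam act h \<in> borel_measurable borel"
proof -
  have "(\<lambda>(x, g). h (act g x)) \<in> borel_measurable (borel \<Otimes>\<^sub>M lam)"
    by measurable
  then show ?thesis
    unfolding avg_op_def[abs_def] by (rule lam.borel_measurable_lebesgue_integral)
qed

lemma abs_avg_op_le: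
  assumes "h \<in> borel_measurable borel" and "\<And>x. \<bar>h x\<bar> \<le> B"
  shows "\<bar>avg_op lam act h x\<bar> \<le> B"
  unfolding avg_op_def using assms by (intro lam.abs_integral_le_bound) simp_all

lemma avg_op_act:
  assumes [measurable]: "h \<in> borel_measurable borel"
  shows "avg_op lam act h (act g x) = avg_op lam act h x"
proof -
  have "avg_op lam act h (act g x) = (\<integral>g'. h (act (gmul g' g) x) \<partial>lam)"
    by (simp add: avg_op_def act_mult)
  also have "\<dots> = (\<integral>g'. h (act g' x) \<partial>distr lam borel (\<lambda>g'. gmul g' g))"
    by (rule integral_distr[symmetric]) measurable
  finally show ?thesis
    by (simp add: distr_mult_right avg_op_def)
qed

lemma integrable_act_mult:
  fixes h u :: "'x \<Rightarrow> real"
  assumes [measurable]: "h \<in> borel_measurable borel" and h_bound: "\<And>x. \<bar>h x\<bar> \<le> B"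
    and [measurable]: "u \<in> borel_measurable borel" and "integrable mu u"
  shows "integrable (mu \<Otimes>\<^sub>M lam) (\<lambda>(x, g). h (act g x) * u x)"
proof (rule mu_lam.Fubini_integrable)
  have fiber_bound: "\<bar>h (act g x) * u x\<bar> \<le> B * \<bar>u x\<bar>" for x g
    using h_bound by (simp add: abs_mult mult_right_mono)
  show "integrable mu (\<lambda>x. \<integral>g. norm ((\<lambda>(x, g). h (act g x) * u x) (x, g)) \<partial>lam)"
  proof (rule Bochner_Integration.integrable_bound)
    show "integrable mu (\<lambda>x. B * \<bar>u x\<bar>)"
      using \<open>integrable mu u\<close> by simp
    have "(\<lambda>(x, g). norm (h (act g x) * u x)) \<in> borel_measurable (mu \<Otimes>\<^sub>M lam)"
      by measurable
    then show "(\<lambda>x. \<integral>g. norm ((\<lambda>(x, g). h (act g x) * u x) (x, g)) \<partial>lam) \<in> borel_measurable mu"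
      by (simp add: lam.borel_measurable_lebesgue_integral)
    have "\<bar>\<integral>g. norm (h (act g x) * u x) \<partial>lam\<bar> \<le> \<bar>B * \<bar>u x\<bar>\<bar>" for x
      using fiber_bound by (intro lam.abs_integral_le_bound(2) order_trans[OF _ abs_ge_self]) simp_all
    then show "AE x in mu. norm (\<integral>g. norm ((\<lambda>(x, g). h (act g x) * u x) (x, g)) \<partial>lam)
        \<le> norm (B * \<bar>u x\<bar>)"
      by simp
  qed
  show "AE x in mu. integrable lam (\<lambda>g. (\<lambda>(x, g). h (act g x) * u x) (x, g))"
    using fiber_bound by (intro AE_I2 lam.abs_integral_le_bound(1)) simp_all
qed measurable

text \<open>By Fubini and the invariance of \<open>mu\<close>, the averaging operator is self-adjoint, so against an
  invariant function it can be dropped.\<close>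
lemma integral_avg_op_mult_invariant:
  assumes [measurable]: "h \<in> borel_measurable borel" and h_bound: "\<And>x. \<bar>h x\<bar> \<le> B"
    and [measurable]: "u \<in> borel_measurable borel" and "integrable mu u"
    and u_inv: "\<And>g. AE x in mu. u (act g x) = u x"
  shows "(\<integral>x. avg_op lam act h x * u x \<partial>mu) = (\<integral>x. h x * u x \<partial>mu)"
proof -
  have "(\<integral>g. \<integral>x. h (act g x) * u x \<partial>mu \<partial>lam) = (\<integral>x. \<integral>g. h (act g x) * u x \<partial>lam \<partial>mu)"
    using integrable_act_mult[OF assms(1-4)] by (rule mu_lam.Fubini_integral)
  then have "(\<integral>x. avg_op lam act h x * u x \<partial>mu) = (\<integral>g. \<integral>x. h (act g x) * u x \<partial>mu \<partial>lam)"
    by (simp add: avg_op_def)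
  also have "\<dots> = (\<integral>g. \<integral>x. h (act g x) * u (act g x) \<partial>mu \<partial>lam)"
  proof (rule Bochner_Integration.integral_cong[OF refl])
    fix g
    show "(\<integral>x. h (act g x) * u x \<partial>mu) = (\<integral>x. h (act g x) * u (act g x) \<partial>mu)"
    proof (rule integral_cong_AE)
      show "AE x in mu. h (act g x) * u x = h (act g x) * u (act g x)"
        using u_inv[of g] by eventually_elim simp
    qed simp_all
  qed
  also have "\<dots> = (\<integral>g. \<integral>x. h x * u x \<partial>distr mu borel (act g) \<partial>lam)"
    by (intro Bochner_Integration.integral_cong[OF refl] integral_distr[symmetric]) simp_all
  finally show ?thesis
    using lam.prob_space by (simp add: distr_act)
qed

lemma L2_avg_op_pythagoras:
  assumes [measurable]: "f \<in> borel_measurable borel" and f_bound: "\<And>x. \<bar>f x\<bar> \<le> B"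
    and [measurable]: "fstar \<in> borel_measurable borel" and fstar_L2: "integrable mu (\<lambda>x. (fstar x)\<^sup>2)"
    and fstar_inv: "\<And>g. AE x in mu. fstar (act g x) = fstar x"
  shows "(\<integral>x. (f x - fstar x)\<^sup>2 \<partial>mu) - (\<integral>x. (avg_op lam act f x - fstar x)\<^sup>2 \<partial>mu)
       = (\<integral>x. (f x - avg_op lam act f x)\<^sup>2 \<partial>mu)"
proof -
  define Of where "Of = avg_op lam act f"
  have [measurable]: "Of \<in> borel_measurable borel"
    unfolding Of_def by measurable
  have Of_bound: "\<bar>Of x\<bar> \<le> B" for x
    unfolding Of_def using f_bound by (rule abs_avg_op_le[rotated]) simp
  have "integrable mu fstar"
    by (rule mu.square_integrable_imp_integrable[OF _ fstar_L2]) simp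
  moreover have "integrable mu Of"
    using Of_bound by (intro mu.integrable_const_bound[where B=B]) auto
  ultimately have integrable_diff: "integrable mu (\<lambda>x. Of x - fstar x)"
    by simp
  have bounded_times_diff: "integrable mu (\<lambda>x. c x * (Of x - fstar x))"
    if "c \<in> borel_measurable borel" and "\<And>x. \<bar>c x\<bar> \<le> B" for c
    using that integrable_diff by (intro integrable_bounded_mult) simp_all
  have "integrable mu (\<lambda>x. (Of x - fstar x)\<^sup>2)"
    using Of_bound fstar_L2 by (intro mu.integrable_bounded_minus_square) simp_all
  moreover have "integrable mu (\<lambda>x. (f x - Of x)\<^sup>2)"
  proof (rule mu.integrable_const_bound[where B="(2 * B)\<^sup>2"])
    have "\<bar>f x - Of x\<bar> \<le> 2 * B" for x
      using f_bound[of x] Of_bound[of x] by linarith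
    from power_mono[OF this abs_ge_zero, of _ 2]
    show "AE x in mu. norm ((f x - Of x)\<^sup>2) \<le> (2 * B)\<^sup>2"
      by simp
  qed simp
  moreover have "(\<integral>x. Of x * (Of x - fstar x) \<partial>mu) = (\<integral>x. f x * (Of x - fstar x) \<partial>mu)"
    unfolding Of_def
  proof (rule integral_avg_op_mult_invariant[OF _ f_bound])
    show "AE x in mu. avg_op lam act f (act g x) - fstar (act g x) = avg_op lam act f x - fstar x" for g
      using fstar_inv[of g] by eventually_elim (simp add: avg_op_act)
  qed (use integrable_diff in \<open>simp_all add: Of_def\<close>)
  moreover have "(f x - fstar x)\<^sup>2 = (f x - Of x)\<^sup>2 + 2 * (f x * (Of x - fstar x))
      - 2 * (Of x * (Of x - fstar x)) + (Of x - fstar x)\<^sup>2" for x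
    by (simp add: power2_eq_square algebra_simps)
  ultimately show ?thesis
    using bounded_times_diff[of f] bounded_times_diff[of Of] f_bound Of_bound
    by (simp add: Of_def)
qed

lemma kperp_eq_avg_op: "kperp lam act k y x = k y x - avg_op lam act (k y) x"
  by (simp add: kperp_def avg_op_def)

lemma measurable_kperp [measurable]:
  assumes "f \<in> measurable M borel" "g \<in> measurable M borel"
  shows "(\<lambda>w. kperp lam act k (f w) (g w)) \<in> borel_measurable M"
proof -
  have "(\<lambda>(p, g). k (fst p) (act g (snd p))) \<in> borel_measurable ((borel \<Otimes>\<^sub>M borel) \<Otimes>\<^sub>M lam)"
    by measurable
  then have "(\<lambda>p. \<integral>g. k (fst p) (act g (snd p)) \<partial>lam) \<in> borel_measurable (borel \<Otimes>\<^sub>M borel)"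
    by (rule lam.borel_measurable_lebesgue_integral)
  then have "(\<lambda>p. kperp lam act k (fst p) (snd p)) \<in> borel_measurable (borel \<Otimes>\<^sub>M borel)"
    unfolding kperp_def by measurable
  from measurable_compose[OF measurable_Pair[OF assms] this] show ?thesis
    by simp
qed

lemma abs_kperp_le: "\<bar>kperp lam act k y x\<bar> \<le> 2 * kernel_bound"
proof -
  have "\<bar>avg_op lam act (k y) x\<bar> \<le> kernel_bound"
    by (rule abs_avg_op_le) (simp_all add: abs_kernel_le)
  then show ?thesis
    unfolding kperp_eq_avg_op using abs_kernel_le[of y x] by linarith
qed

definition kperp_features :: "('n \<Rightarrow> 'x) \<Rightarrow> 'x \<Rightarrow> real^'n" where
  "kperp_features xv x = (\<chi> i. kperp lam act k (xv i) x)"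

lemma integrable_kperp_features:
  "integrable mu (\<lambda>x. kperp_features xv x $ i * kperp_features xv x $ j)"
proof (rule mu.integrable_const_bound[where B="2 * kernel_bound * (2 * kernel_bound)"])
  have "\<bar>kperp lam act k (xv i) x\<bar> * \<bar>kperp lam act k (xv j) x\<bar> \<le> 2 * kernel_bound * (2 * kernel_bound)" for x
    by (intro mult_mono abs_kperp_le) (simp_all add: kernel_bound_nonneg)
  then show "AE x in mu. norm (kperp_features xv x $ i * kperp_features xv x $ j)
      \<le> 2 * kernel_bound * (2 * kernel_bound)"
    by (simp add: kperp_features_def abs_mult)
qed (simp add: kperp_features_def)

lemma measurable_kernel_expansion [measurable]:
  "(\<lambda>x. (\<chi> i. k (xv i) x) \<bullet> \<alpha>) \<in> borel_measurable borel"
  by (simp add: inner_vec_def)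

lemma abs_kernel_expansion_le:
  "\<bar>(\<chi> i. k (xv i) x) \<bullet> \<alpha>\<bar> \<le> (\<Sum>i\<in>UNIV. \<bar>\<alpha>$i\<bar>) * kernel_bound"
proof -
  have "\<bar>\<Sum>i\<in>UNIV. k (xv i) x * \<alpha>$i\<bar> \<le> (\<Sum>i\<in>UNIV. \<bar>\<alpha>$i\<bar> * kernel_bound)"
    by (rule order_trans[OF sum_abs sum_mono])
      (simp add: abs_mult mult.commute mult_left_mono abs_kernel_le)
  then show ?thesis
    by (simp add: inner_vec_def sum_distrib_right)
qed

lemma kernel_expansion_minus_avg_op:
  "(\<chi> i. k (xv i) x) \<bullet> \<alpha> - avg_op lam act (\<lambda>x. (\<chi> i. k (xv i) x) \<bullet> \<alpha>) x
    = kperp_features xv x \<bullet> \<alpha>"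
proof -
  have "integrable lam (\<lambda>g. k (xv i) (act g x) * \<alpha>$i)" for i
    by (rule lam.abs_integral_le_bound(1)[where B="kernel_bound * \<bar>\<alpha>$i\<bar>"])
      (simp_all add: abs_mult abs_kernel_le mult_right_mono)
  then show ?thesis
    by (simp add: avg_op_def kperp_def kperp_features_def inner_vec_def sum_subtractf
        left_diff_distrib)
qed

lemma L2_kernel_expansion_minus_avg_op:
  fixes xv :: "'n::finite \<Rightarrow> 'x" and \<alpha> :: "real^'n"
  defines "f \<equiv> \<lambda>x. (\<chi> i. k (xv i) x) \<bullet> \<alpha>"
  shows "(\<integral>x. (f x - avg_op lam act f x)\<^sup>2 \<partial>mu)
    = \<alpha> \<bullet> (gram_matrix mu (kperp_features xv) *v \<alpha>)"
  unfolding f_def kernel_expansion_minus_avg_op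
  by (simp add: gram_matrix_quadratic_form[OF integrable_kperp_features] inner_commute)

end

section \<open>Kernel ridge regression with noisy labels\<close>

locale noisy_test_point =
  fixes Q :: "'t measure" and Xt :: "'t \<Rightarrow> 'x::topological_space" and xit :: "'t \<Rightarrow> real"
    and mu :: "'x measure" and sigma :: real
  assumes Q_prob: "prob_space Q"
    and Xt_meas [measurable]: "Xt \<in> measurable Q borel" and Xt_distr: "distr Q borel Xt = mu"
    and xit_meas [measurable]: "xit \<in> borel_measurable Q"
    and xit_L2: "integrable Q (\<lambda>t. (xit t)\<^sup>2)"
    and xit_mean: "AE t in Q. real_cond_exp Q (vimage_algebra (space Q) Xt borel) xit t = 0"
    and xit_var: "(\<integral>t. (xit t)\<^sup>2 \<partial>Q) = sigma\<^sup>2"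
begin

sublocale Q: prob_space Q
  by (rule Q_prob)

sublocale test: sigma_finite_subalgebra Q "vimage_algebra (space Q) Xt borel"
  by (rule Q.sigma_finite_subalgebra_vimage_algebra[OF Xt_meas])

lemma risk_eq_L2_plus_noise:
  assumes [measurable]: "h \<in> borel_measurable borel" "fstar \<in> borel_measurable borel"
    and L2: "integrable mu (\<lambda>x. (h x - fstar x)\<^sup>2)"
  shows "risk Q Xt xit fstar h = (\<integral>x. (h x - fstar x)\<^sup>2 \<partial>mu) + sigma\<^sup>2"
proof -
  define \<phi> where "\<phi> x = h x - fstar x" for x
  have [measurable]: "\<phi> \<in> borel_measurable borel"
    unfolding \<phi>_def by measurable
  have \<phi>_L2: "integrable Q (\<lambda>t. (\<phi> (Xt t))\<^sup>2)" "(\<integral>t. (\<phi> (Xt t))\<^sup>2 \<partial>Q) = (\<integral>x. (\<phi> x)\<^sup>2 \<partial>mu)"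
    using L2 integrable_distr_eq[of Xt Q borel "\<lambda>x. (\<phi> x)\<^sup>2"] integral_distr[of Xt Q borel "\<lambda>x. (\<phi> x)\<^sup>2"]
    by (simp_all add: Xt_distr \<phi>_def)
  have cross: "integrable Q (\<lambda>t. \<phi> (Xt t) * xit t)"
    using integrable_bounded_times_product[of "\<lambda>_. 1" Q "\<lambda>t. \<phi> (Xt t)" xit 1] \<phi>_L2 xit_L2 by simp
  have "(\<integral>t. \<phi> (Xt t) * xit t \<partial>Q) = 0"
    using test.integral_mult_cond_exp_const[OF _ xit_meas cross xit_mean]
    by (simp add: measurable_vimage_algebra1[THEN measurable_compose])
  moreover have "(\<phi> (Xt t) - xit t)\<^sup>2 = (\<phi> (Xt t))\<^sup>2 - 2 * (\<phi> (Xt t) * xit t) + (xit t)\<^sup>2" for t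
    by (simp add: power2_eq_square algebra_simps)
  ultimately have "(\<integral>t. (\<phi> (Xt t) - xit t)\<^sup>2 \<partial>Q) = (\<integral>x. (\<phi> x)\<^sup>2 \<partial>mu) + sigma\<^sup>2"
    using \<phi>_L2 cross xit_L2 xit_var by simp
  then show ?thesis
    by (simp add: risk_def \<phi>_def algebra_simps)
qed

end

locale kernel_ridge = invariant_kernel gmul e ginv lam act mu k
  for gmul :: "'g::{second_countable_topology,t2_space} \<Rightarrow> 'g \<Rightarrow> 'g" and e ginv lam
    and act :: "'g \<Rightarrow> 'x::topological_space \<Rightarrow> 'x" and mu k +
  fixes rho :: real
  assumes rho_pos: "rho > 0"
begin

definition ridge_matrix :: "('n::finite \<Rightarrow> 'x) \<Rightarrow> real^'n^'n" where
  "ridge_matrix xv = (\<chi> i j. k (xv i) (xv j)) + rho *\<^sub>R mat 1"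

definition excess_matrix :: "('n::finite \<Rightarrow> 'x) \<Rightarrow> real^'n^'n" where
  "excess_matrix xv = transpose (matrix_inv (ridge_matrix xv)) ** gram_matrix mu (kperp_features xv)
     ** matrix_inv (ridge_matrix xv)"

lemma norm_ridge_matrix_ge: "rho * norm u \<le> norm (ridge_matrix xv *v u)"
  unfolding ridge_matrix_def
  by (rule norm_ridge_matrix_vector_mult_ge) (rule pd_kernel_gram_psd[OF kernel])

lemma norm_ridge_matrix_le:
  fixes xv :: "'n::finite \<Rightarrow> 'x"
  shows "norm (ridge_matrix xv *v u) \<le> (real CARD('n) * kernel_bound + rho) * norm u"
proof -
  have "norm (ridge_matrix xv *v u) \<le> norm ((\<chi> i j. k (xv i) (xv j)) *v u) + norm (rho *\<^sub>R u)"
    unfolding ridge_matrix_def matrix_vector_mult_add_rdistrib scaleR_matrix_vector_assoc[symmetric]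
    by (simp only: matrix_vector_mul_lid norm_triangle_ineq)
  also have "\<dots> \<le> real CARD('n) * kernel_bound * norm u + rho * norm u"
    using norm_matrix_vector_mult_le[of "\<chi> i j. k (xv i) (xv j)" kernel_bound u] rho_pos
    by (simp add: abs_kernel_le)
  finally show ?thesis
    by (simp add: algebra_simps)
qed

lemma invertible_ridge_matrix: "invertible (ridge_matrix xv)"
  using rho_pos norm_ridge_matrix_ge by (rule invertible_if_norm_ge)

lemma transpose_ridge_matrix: "transpose (ridge_matrix xv) = ridge_matrix xv"
proof -
  have "k (xv j) (xv i) = k (xv i) (xv j)" for i j
    using kernel by (simp add: pd_kernel_def)
  then show ?thesis
    by (simp add: ridge_matrix_def transpose_def vec_eq_iff mat_def)
qed

lemma krr_eq_kernel_expansion: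
  "krr k rho xv Ys = (\<lambda>x. (\<chi> i. k (xv i) x) \<bullet> (matrix_inv (ridge_matrix xv) *v (\<chi> i. Ys i)))"
  by (simp add: krr_def ridge_matrix_def fun_eq_iff)

lemma L2_krr_minus_avg_op:
  fixes xv :: "'n::finite \<Rightarrow> 'x" and Ys :: "'n \<Rightarrow> real"
  assumes "fstar \<in> borel_measurable borel" "integrable mu (\<lambda>x. (fstar x)\<^sup>2)"
    and "\<And>g. AE x in mu. fstar (act g x) = fstar x"
  shows "(\<integral>x. (krr k rho xv Ys x - fstar x)\<^sup>2 \<partial>mu)
      - (\<integral>x. (avg_op lam act (krr k rho xv Ys) x - fstar x)\<^sup>2 \<partial>mu)
    = (\<chi> i. Ys i) \<bullet> (excess_matrix xv *v (\<chi> i. Ys i))"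
  unfolding krr_eq_kernel_expansion
  by (simp add: L2_avg_op_pythagoras[OF _ abs_kernel_expansion_le assms]
      L2_kernel_expansion_minus_avg_op excess_matrix_def inner_congruence)

lemma excess_matrix_quadratic_form_ge:
  fixes xv :: "'n::finite \<Rightarrow> 'x"
  assumes eig: "\<And>ev. mat_eigenvalue (gram_matrix mu (kperp_features xv)) ev \<Longrightarrow> c \<le> ev"
  shows "max c 0 * norm v ^ 2 / (real CARD('n) * kernel_bound + rho)\<^sup>2
    \<le> v \<bullet> (excess_matrix xv *v v)"
proof -
  define D where "D = real CARD('n) * kernel_bound + rho"
  define u where "u = matrix_inv (ridge_matrix xv) *v v"
  have "D > 0"
    using rho_pos kernel_bound_nonneg by (simp add: D_def add_nonneg_pos)
  have "norm v \<le> D * norm u"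
    unfolding u_def D_def using invertible_ridge_matrix norm_ridge_matrix_le by (rule norm_le_matrix_inv)
  then have "norm v ^ 2 / D\<^sup>2 \<le> norm u ^ 2"
    using \<open>D > 0\<close> power_mono[of "norm v" "D * norm u" 2] by (simp add: field_simps power_mult_distrib)
  then have "max c 0 * (norm v ^ 2 / D\<^sup>2) \<le> max c 0 * norm u ^ 2"
    by (rule mult_left_mono) simp
  also have "\<dots> \<le> u \<bullet> (gram_matrix mu (kperp_features xv) *v u)"
  proof -
    have "c * norm u ^ 2 \<le> u \<bullet> (gram_matrix mu (kperp_features xv) *v u)"
      by (rule quadratic_form_ge_eigenvalue_bound[OF transpose_gram_matrix eig])
    moreover have "0 \<le> u \<bullet> (gram_matrix mu (kperp_features xv) *v u)"
      by (rule gram_matrix_psd[OF integrable_kperp_features])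
    ultimately show ?thesis
      by (simp add: max_def)
  qed
  also have "\<dots> = v \<bullet> (excess_matrix xv *v v)"
    by (simp add: u_def excess_matrix_def inner_congruence)
  finally show ?thesis
    by (simp add: D_def)
qed

lemma trace_excess_matrix_ge:
  fixes xv :: "'n::finite \<Rightarrow> 'x"
  shows "trace (gram_matrix mu (kperp_features xv)) / (real CARD('n) * kernel_bound + rho)\<^sup>2
    \<le> trace (excess_matrix xv)"
  unfolding excess_matrix_def
proof (rule trace_congruence_gram_matrix_ge[OF integrable_kperp_features])
  show "0 < real CARD('n) * kernel_bound + rho"
    using rho_pos kernel_bound_nonneg by (simp add: add_nonneg_pos)
  show "norm v \<le> (real CARD('n) * kernel_bound + rho) * norm (transpose (matrix_inv (ridge_matrix xv)) *v v)" for v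
    using norm_le_matrix_inv[OF invertible_ridge_matrix norm_ridge_matrix_le]
    by (simp add: transpose_matrix_inv_symmetric invertible_ridge_matrix transpose_ridge_matrix)
qed

lemma excess_matrix_psd: "0 \<le> v \<bullet> (excess_matrix xv *v v)"
  unfolding excess_matrix_def inner_congruence[symmetric]
  by (rule gram_matrix_psd[OF integrable_kperp_features])

lemma abs_excess_matrix_le:
  fixes xv :: "'n::finite \<Rightarrow> 'x"
  shows "\<bar>excess_matrix xv $ a $ b\<bar> \<le> (real CARD('n))\<^sup>2 * (1 / rho * (2 * kernel_bound)\<^sup>2 * (1 / rho))"
  unfolding excess_matrix_def
proof (rule abs_congruence_entry_le)
  show "\<bar>matrix_inv (ridge_matrix xv) $ i $ j\<bar> \<le> 1 / rho" for i j
    using invertible_ridge_matrix rho_pos norm_ridge_matrix_ge by (rule abs_matrix_inv_entry_le)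
  show "\<bar>gram_matrix mu (kperp_features xv) $ i $ j\<bar> \<le> (2 * kernel_bound)\<^sup>2" for i j
  proof -
    have "\<bar>kperp lam act k (xv i) x * kperp lam act k (xv j) x\<bar> \<le> (2 * kernel_bound)\<^sup>2" for x
      unfolding abs_mult power2_eq_square by (intro mult_mono abs_kperp_le) (simp_all add: kernel_bound_nonneg)
    then have "\<bar>\<integral>x. kperp lam act k (xv i) x * kperp lam act k (xv j) x \<partial>mu\<bar> \<le> (2 * kernel_bound)\<^sup>2"
      by (intro mu.abs_integral_le_bound(2)) simp_all
    then show ?thesis
      by (simp add: gram_matrix_def kperp_features_def)
  qed
qed

lemma measurable_excess_matrix [measurable]:
  "(\<lambda>xv. excess_matrix xv $ a $ b) \<in> borel_measurable (Pi\<^sub>M (UNIV :: 'n::finite set) (\<lambda>_. borel :: 'x measure))"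
proof -
  have [measurable]: "(\<lambda>xv. ridge_matrix xv $ i $ j) \<in> borel_measurable (Pi\<^sub>M (UNIV :: 'n set) (\<lambda>_. borel))" for i j
    by (simp add: ridge_matrix_def mat_def)
  have [measurable]: "(\<lambda>xv. matrix_inv (ridge_matrix xv) $ i $ j) \<in> borel_measurable (Pi\<^sub>M (UNIV :: 'n set) (\<lambda>_. borel))" for i j
  proof -
    have [measurable]: "(\<lambda>xv. (\<chi> a b. if b = i then (if a = j then 1 else 0) else ridge_matrix xv $ a $ b) $ p $ q)
        \<in> borel_measurable (Pi\<^sub>M (UNIV :: 'n set) (\<lambda>_. borel))" for p q
      by (cases "q = i") simp_all
    show ?thesis
      unfolding matrix_inv_entry_cramer[OF invertible_ridge_matrix]
      by (intro borel_measurable_divide borel_measurable_det) simp_all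
  qed
  have "(\<lambda>(xv, x). kperp_features xv x $ i * kperp_features xv x $ j)
      \<in> borel_measurable (Pi\<^sub>M (UNIV :: 'n set) (\<lambda>_. borel) \<Otimes>\<^sub>M mu)" for i j
    by (simp add: kperp_features_def)
  then have [measurable]: "(\<lambda>xv. gram_matrix mu (kperp_features xv) $ i $ j) \<in> borel_measurable (Pi\<^sub>M (UNIV :: 'n set) (\<lambda>_. borel))" for i j
    unfolding gram_matrix_def by (simp add: mu.borel_measurable_lebesgue_integral)
  show ?thesis
    unfolding excess_matrix_def congruence_entry by measurable
qed

lemma risk_krr_minus_risk_avg_op:
  fixes xv :: "'n::finite \<Rightarrow> 'x" and Ys :: "'n \<Rightarrow> real" and sigma :: real
  assumes "noisy_test_point Q Xt xit mu sigma"
    and [measurable]: "fstar \<in> borel_measurable borel" and fstar_L2: "integrable mu (\<lambda>x. (fstar x)\<^sup>2)"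
    and fstar_inv: "\<And>g. AE x in mu. fstar (act g x) = fstar x"
  shows "risk Q Xt xit fstar (krr k rho xv Ys) - risk Q Xt xit fstar (avg_op lam act (krr k rho xv Ys))
    = (\<chi> i. Ys i) \<bullet> (excess_matrix xv *v (\<chi> i. Ys i))"
proof -
  interpret noisy_test_point Q Xt xit mu sigma
    by (rule assms(1))
  define f where "f = krr k rho xv Ys"
  define B where "B = (\<Sum>i\<in>UNIV. \<bar>(matrix_inv (ridge_matrix xv) *v (\<chi> i. Ys i)) $ i\<bar>) * kernel_bound"
  have [measurable]: "f \<in> borel_measurable borel" and f_bound: "\<And>x. \<bar>f x\<bar> \<le> B"
    unfolding f_def B_def krr_eq_kernel_expansion by (simp_all only: measurable_kernel_expansion abs_kernel_expansion_le)
  have "\<bar>avg_op lam act f x\<bar> \<le> B" for x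
    using f_bound by (intro abs_avg_op_le) simp_all
  then have "integrable mu (\<lambda>x. (avg_op lam act f x - fstar x)\<^sup>2)"
    by (intro mu.integrable_bounded_minus_square[OF _ _ _ fstar_L2]) simp_all
  moreover have "integrable mu (\<lambda>x. (f x - fstar x)\<^sup>2)"
    using f_bound by (intro mu.integrable_bounded_minus_square[OF _ _ _ fstar_L2]) simp_all
  ultimately have "risk Q Xt xit fstar f - risk Q Xt xit fstar (avg_op lam act f)
      = (\<integral>x. (f x - fstar x)\<^sup>2 \<partial>mu) - (\<integral>x. (avg_op lam act f x - fstar x)\<^sup>2 \<partial>mu)"
    by (simp add: risk_eq_L2_plus_noise)
  then show ?thesis
    unfolding f_def L2_krr_minus_avg_op[OF assms(2-4)] .
qed

end

locale noisy_sample =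
  fixes P :: "'w measure" and X :: "'n::finite \<Rightarrow> 'w \<Rightarrow> 'x::topological_space"
    and xi :: "'n \<Rightarrow> 'w \<Rightarrow> real" and mu :: "'x measure" and sigma :: real
  assumes P_prob: "prob_space P"
    and X_meas [measurable]: "\<And>i. X i \<in> measurable P borel"
    and X_distr: "\<And>i. distr P borel (X i) = mu"
    and xi_meas [measurable]: "\<And>i. xi i \<in> borel_measurable P"
    and xi_L2: "\<And>i. integrable P (\<lambda>w. (xi i w)\<^sup>2)"
    and xi_mean: "\<And>i. AE w in P.
      real_cond_exp P (vimage_algebra (space P) (\<lambda>w i. X i w) (Pi\<^sub>M UNIV (\<lambda>_. borel))) (xi i) w = 0"
    and xi_cov: "\<And>i j. AE w in P.
      real_cond_exp P (vimage_algebra (space P) (\<lambda>w i. X i w) (Pi\<^sub>M UNIV (\<lambda>_. borel)))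
        (\<lambda>w. xi i w * xi j w) w = (if i = j then sigma\<^sup>2 else 0)"
begin

abbreviation sample_algebra :: "'w measure" where
  "sample_algebra \<equiv> vimage_algebra (space P) (\<lambda>w i. X i w) (Pi\<^sub>M UNIV (\<lambda>_. borel))"

sublocale P: prob_space P
  by (rule P_prob)

lemma measurable_sample: "(\<lambda>w i. X i w) \<in> measurable P (Pi\<^sub>M UNIV (\<lambda>_. borel))"
  by (rule measurable_PiM_single') (auto simp: space_PiM)

sublocale sample: sigma_finite_subalgebra P sample_algebra
  by (rule P.sigma_finite_subalgebra_vimage_algebra[OF measurable_sample])

lemma measurable_sample_algebra:
  assumes "h \<in> borel_measurable (Pi\<^sub>M UNIV (\<lambda>_. borel))"
  shows "(\<lambda>w. h (\<lambda>i. X i w)) \<in> borel_measurable sample_algebra"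
proof -
  have "(\<lambda>w i. X i w) \<in> measurable sample_algebra (Pi\<^sub>M UNIV (\<lambda>_. borel))"
    by (rule measurable_vimage_algebra1) (simp add: space_PiM)
  from measurable_compose[OF this assms] show ?thesis .
qed

lemma measurable_from_sample_algebra:
  "g \<in> borel_measurable sample_algebra \<Longrightarrow> g \<in> borel_measurable P"
  by (rule measurable_from_subalg[OF sample.subalg])

lemma integral_noisy_product:
  fixes g p q :: "'w \<Rightarrow> real"
  assumes meas: "g \<in> borel_measurable sample_algebra" "p \<in> borel_measurable sample_algebra"
      "q \<in> borel_measurable sample_algebra"
    and g_bound: "\<And>w. \<bar>g w\<bar> \<le> Bd"
    and p_L2: "integrable P (\<lambda>w. (p w)\<^sup>2)" and q_L2: "integrable P (\<lambda>w. (q w)\<^sup>2)"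
  shows "integrable P (\<lambda>w. g w * ((p w + xi a w) * (q w + xi b w)))"
    and "(\<integral>w. g w * ((p w + xi a w) * (q w + xi b w)) \<partial>P)
      = (\<integral>w. g w * (p w * q w) \<partial>P) + (if a = b then sigma\<^sup>2 * (\<integral>w. g w \<partial>P) else 0)"
proof -
  have [measurable]: "g \<in> borel_measurable P" "p \<in> borel_measurable P" "q \<in> borel_measurable P"
    using meas by (simp_all add: measurable_from_sample_algebra)
  have int: "integrable P (\<lambda>w. g w * (u w * v w))"
    if [measurable]: "u \<in> borel_measurable P" "v \<in> borel_measurable P"
      and "integrable P (\<lambda>w. (u w)\<^sup>2)" "integrable P (\<lambda>w. (v w)\<^sup>2)" for u v
    using that g_bound by (intro integrable_bounded_times_product) simp_all
  have "integrable P (\<lambda>w. (p w + xi a w)\<^sup>2)" "integrable P (\<lambda>w. (q w + xi b w)\<^sup>2)"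
    using p_L2 q_L2 xi_L2 by (simp_all add: integrable_power2_add)
  then show "integrable P (\<lambda>w. g w * ((p w + xi a w) * (q w + xi b w)))"
    by (intro int) simp_all
  have noise: "(\<integral>w. (g w * u w) * xi c w \<partial>P) = 0"
    if "u \<in> borel_measurable sample_algebra" "integrable P (\<lambda>w. g w * (u w * xi c w))" for u c
    using sample.integral_mult_cond_exp_const[of "\<lambda>w. g w * u w" "xi c" 0] that meas xi_mean[of c]
    by (simp add: mult.assoc)
  have "(\<integral>w. g w * (xi a w * xi b w) \<partial>P) = (if a = b then sigma\<^sup>2 else 0) * (\<integral>w. g w \<partial>P)"
    using int[of "xi a" "xi b"] xi_L2 meas xi_cov[of a b]
    by (intro sample.integral_mult_cond_exp_const) simp_all
  moreover have "(\<integral>w. g w * (p w * xi b w) \<partial>P) = 0" "(\<integral>w. g w * (q w * xi a w) \<partial>P) = 0"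
    using noise[of p b] noise[of q a] int[of p "xi b"] int[of q "xi a"] meas p_L2 q_L2 xi_L2
    by (simp_all add: mult.assoc)
  moreover have "g w * ((p w + xi a w) * (q w + xi b w)) = g w * (p w * q w) + g w * (p w * xi b w)
      + g w * (q w * xi a w) + g w * (xi a w * xi b w)" for w
    by (simp add: algebra_simps)
  ultimately show "(\<integral>w. g w * ((p w + xi a w) * (q w + xi b w)) \<partial>P)
      = (\<integral>w. g w * (p w * q w) \<partial>P) + (if a = b then sigma\<^sup>2 * (\<integral>w. g w \<partial>P) else 0)"
    using int[of p q] int[of p "xi b"] int[of q "xi a"] int[of "xi a" "xi b"] p_L2 q_L2 xi_L2
    by simp
qed

lemma integrable_sample_quadratic_form:
  fixes B :: "'w \<Rightarrow> real^'n^'n" and F :: "'w \<Rightarrow> real^'n"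
  assumes "\<And>a b. (\<lambda>w. B w $ a $ b) \<in> borel_measurable sample_algebra"
    and "\<And>w a b. \<bar>B w $ a $ b\<bar> \<le> Bd"
    and "\<And>a. (\<lambda>w. F w $ a) \<in> borel_measurable sample_algebra"
    and "\<And>a. integrable P (\<lambda>w. (F w $ a)\<^sup>2)"
  shows "integrable P (\<lambda>w. F w \<bullet> (B w *v F w))"
proof -
  have "integrable P (\<lambda>w. B w $ a $ b * (F w $ a * F w $ b))" for a b
    using integrable_bounded_times_product[OF _ _ _ assms(2) assms(4) assms(4)] assms(1,3)
    by (simp add: measurable_from_sample_algebra)
  then show ?thesis
    by (simp add: inner_matrix_vector_mult_eq_sum mult_ac)
qed

lemma expectation_noisy_quadratic_form:
  fixes B :: "'w \<Rightarrow> real^'n^'n" and F :: "'w \<Rightarrow> real^'n"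
  assumes B_meas: "\<And>a b. (\<lambda>w. B w $ a $ b) \<in> borel_measurable sample_algebra"
    and B_bound: "\<And>w a b. \<bar>B w $ a $ b\<bar> \<le> Bd"
    and F_meas: "\<And>a. (\<lambda>w. F w $ a) \<in> borel_measurable sample_algebra"
    and F_L2: "\<And>a. integrable P (\<lambda>w. (F w $ a)\<^sup>2)"
  defines "Y \<equiv> \<lambda>w. F w + (\<chi> i. xi i w)"
  shows "integrable P (\<lambda>w. Y w \<bullet> (B w *v Y w))"
    and "(\<integral>w. Y w \<bullet> (B w *v Y w) \<partial>P)
      = (\<integral>w. F w \<bullet> (B w *v F w) \<partial>P) + sigma\<^sup>2 * (\<integral>w. trace (B w) \<partial>P)"
proof -
  note noisy = integral_noisy_product[OF B_meas F_meas F_meas B_bound F_L2 F_L2]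
  have Y_form: "Y w \<bullet> (B w *v Y w)
      = (\<Sum>a\<in>UNIV. \<Sum>b\<in>UNIV. B w $ a $ b * ((F w $ a + xi a w) * (F w $ b + xi b w)))" for w
    by (simp add: Y_def inner_matrix_vector_mult_eq_sum mult_ac)
  have F_form: "F w \<bullet> (B w *v F w) = (\<Sum>a\<in>UNIV. \<Sum>b\<in>UNIV. B w $ a $ b * (F w $ a * F w $ b))" for w
    by (simp add: inner_matrix_vector_mult_eq_sum mult_ac)
  show "integrable P (\<lambda>w. Y w \<bullet> (B w *v Y w))"
    unfolding Y_form using noisy(1) by simp
  have BFF: "integrable P (\<lambda>w. B w $ a $ b * (F w $ a * F w $ b))" for a b
    using integrable_bounded_times_product[OF _ _ _ B_bound F_L2 F_L2] B_meas F_meas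
    by (simp add: measurable_from_sample_algebra)
  have B_int: "integrable P (\<lambda>w. B w $ a $ a)" for a
    using B_bound B_meas
    by (intro P.integrable_const_bound[where B=Bd]) (simp_all add: measurable_from_sample_algebra)
  have "(\<integral>w. Y w \<bullet> (B w *v Y w) \<partial>P)
      = (\<Sum>a\<in>UNIV. \<Sum>b\<in>UNIV. \<integral>w. B w $ a $ b * ((F w $ a + xi a w) * (F w $ b + xi b w)) \<partial>P)"
    unfolding Y_form using noisy(1) by (simp add: Bochner_Integration.integral_sum)
  also have "\<dots> = (\<Sum>a\<in>UNIV. \<Sum>b\<in>UNIV. (\<integral>w. B w $ a $ b * (F w $ a * F w $ b) \<partial>P)
      + (if a = b then sigma\<^sup>2 * (\<integral>w. B w $ a $ b \<partial>P) else 0))"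
    by (simp only: noisy(2))
  also have "\<dots> = (\<Sum>a\<in>UNIV. \<Sum>b\<in>UNIV. \<integral>w. B w $ a $ b * (F w $ a * F w $ b) \<partial>P)
      + sigma\<^sup>2 * (\<Sum>a\<in>UNIV. \<integral>w. B w $ a $ a \<partial>P)"
    by (simp add: sum.distrib sum_distrib_left)
  also have "\<dots> = (\<integral>w. F w \<bullet> (B w *v F w) \<partial>P) + sigma\<^sup>2 * (\<integral>w. trace (B w) \<partial>P)"
    unfolding F_form trace_def using BFF B_int by (simp add: Bochner_Integration.integral_sum)
  finally show "(\<integral>w. Y w \<bullet> (B w *v Y w) \<partial>P)
      = (\<integral>w. F w \<bullet> (B w *v F w) \<partial>P) + sigma\<^sup>2 * (\<integral>w. trace (B w) \<partial>P)" .
qed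

end

locale krr_sample = kernel_ridge gmul e ginv lam act mu k rho + noisy_sample P X xi mu sigma
  for gmul :: "'g::{second_countable_topology,t2_space} \<Rightarrow> 'g \<Rightarrow> 'g" and e ginv lam
    and act :: "'g \<Rightarrow> 'x::topological_space \<Rightarrow> 'x" and mu k rho
    and P :: "'w measure" and X :: "'n::finite \<Rightarrow> 'w \<Rightarrow> 'x" and xi sigma
begin

abbreviation sample_excess_matrix :: "'w \<Rightarrow> real^'n^'n" where
  "sample_excess_matrix w \<equiv> excess_matrix (\<lambda>i. X i w)"

lemma measurable_sample_excess_matrix:
  "(\<lambda>w. sample_excess_matrix w $ a $ b) \<in> borel_measurable sample_algebra"
  by (rule measurable_sample_algebra[OF measurable_excess_matrix])

lemma integrable_sample_excess_trace: "integrable P (\<lambda>w. trace (sample_excess_matrix w))"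
proof (rule P.integrable_const_bound)
  show "AE w in P. norm (trace (sample_excess_matrix w))
      \<le> (\<Sum>a\<in>(UNIV::'n set). (real CARD('n))\<^sup>2 * (1 / rho * (2 * kernel_bound)\<^sup>2 * (1 / rho)))"
    unfolding trace_def real_norm_def by (intro AE_I2 order_trans[OF sum_abs] sum_mono abs_excess_matrix_le)
  show "(\<lambda>w. trace (sample_excess_matrix w)) \<in> borel_measurable P"
    unfolding trace_def using measurable_sample_excess_matrix
    by (intro borel_measurable_sum) (simp add: measurable_from_sample_algebra)
qed

lemma expectation_trace_sample_excess_ge:
  "real CARD('n) * (\<integral>x. \<integral>y. (kperp lam act k x y)\<^sup>2 \<partial>mu \<partial>mu) / (real CARD('n) * kernel_bound + rho)\<^sup>2
    \<le> (\<integral>w. trace (sample_excess_matrix w) \<partial>P)"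
proof -
  define \<psi> where "\<psi> x = (\<integral>y. (kperp lam act k x y)\<^sup>2 \<partial>mu)" for x
  have [measurable]: "\<psi> \<in> borel_measurable borel"
  proof -
    have "(\<lambda>(x, y). (kperp lam act k x y)\<^sup>2) \<in> borel_measurable (borel \<Otimes>\<^sub>M mu)"
      by measurable
    then show ?thesis
      unfolding \<psi>_def by (rule mu.borel_measurable_lebesgue_integral)
  qed
  have trace_gram: "trace (gram_matrix mu (kperp_features (\<lambda>i. X i w))) = (\<Sum>i\<in>UNIV. \<psi> (X i w))" for w
    by (simp add: trace_def gram_matrix_def kperp_features_def \<psi>_def power2_eq_square)
  have \<psi>_bound: "\<bar>\<psi> x\<bar> \<le> (2 * kernel_bound)\<^sup>2" for x
    unfolding \<psi>_def using power_mono[OF abs_kperp_le[of x] abs_ge_zero, where n=2]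
    by (intro mu.abs_integral_le_bound(2)) simp_all
  have \<psi>_int: "integrable P (\<lambda>w. \<psi> (X i w))" for i
    using \<psi>_bound by (intro P.integrable_const_bound[where B="(2 * kernel_bound)\<^sup>2"]) simp_all
  have "real CARD('n) * (\<integral>x. \<psi> x \<partial>mu) = (\<integral>w. trace (gram_matrix mu (kperp_features (\<lambda>i. X i w))) \<partial>P)"
    using \<psi>_int integral_distr[OF X_meas, of \<psi>] by (simp add: trace_gram X_distr)
  then have "real CARD('n) * (\<integral>x. \<psi> x \<partial>mu) / (real CARD('n) * kernel_bound + rho)\<^sup>2
      = (\<integral>w. trace (gram_matrix mu (kperp_features (\<lambda>i. X i w))) / (real CARD('n) * kernel_bound + rho)\<^sup>2 \<partial>P)"
    by simp
  also have "\<dots> \<le> (\<integral>w. trace (sample_excess_matrix w) \<partial>P)"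
  proof (rule integral_mono)
    show "integrable P (\<lambda>w. trace (gram_matrix mu (kperp_features (\<lambda>i. X i w)))
        / (real CARD('n) * kernel_bound + rho)\<^sup>2)"
      using \<psi>_int by (simp add: trace_gram)
    show "trace (gram_matrix mu (kperp_features (\<lambda>i. X i w))) / (real CARD('n) * kernel_bound + rho)\<^sup>2
        \<le> trace (sample_excess_matrix w)" for w
      by (rule trace_excess_matrix_ge)
  qed (rule integrable_sample_excess_trace)
  finally show ?thesis
    by (simp add: \<psi>_def)
qed

lemma expectation_fstar_form_ge:
  assumes [measurable]: "fstar \<in> borel_measurable borel" and fstar_L2: "integrable mu (\<lambda>x. (fstar x)\<^sup>2)"
    and eig: "AE w in P. \<forall>ev. mat_eigenvalue (gram_matrix mu (kperp_features (\<lambda>i. X i w))) ev \<longrightarrow> c \<le> ev"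
  defines "F \<equiv> \<lambda>w. \<chi> i. fstar (X i w)"
  shows "max c 0 * real CARD('n) * (\<integral>x. (fstar x)\<^sup>2 \<partial>mu) / (real CARD('n) * kernel_bound + rho)\<^sup>2
    \<le> (\<integral>w. F w \<bullet> (sample_excess_matrix w *v F w) \<partial>P)"
proof -
  have F_meas: "(\<lambda>w. F w $ a) \<in> borel_measurable sample_algebra" for a
    unfolding F_def using measurable_sample_algebra[of "\<lambda>xv. fstar (xv a)"] by simp
  have F_L2: "integrable P (\<lambda>w. (F w $ a)\<^sup>2)" "(\<integral>w. (F w $ a)\<^sup>2 \<partial>P) = (\<integral>x. (fstar x)\<^sup>2 \<partial>mu)" for a
    using fstar_L2 integrable_distr_eq[OF X_meas, of "\<lambda>x. (fstar x)\<^sup>2" a]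
      integral_distr[OF X_meas, of "\<lambda>x. (fstar x)\<^sup>2" a]
    by (simp_all add: F_def X_distr)
  have "max c 0 * real CARD('n) * (\<integral>x. (fstar x)\<^sup>2 \<partial>mu) / (real CARD('n) * kernel_bound + rho)\<^sup>2
      = (\<integral>w. max c 0 * norm (F w) ^ 2 / (real CARD('n) * kernel_bound + rho)\<^sup>2 \<partial>P)"
    using F_L2 by (simp add: norm_power2_vec Bochner_Integration.integral_sum)
  also have "\<dots> \<le> (\<integral>w. F w \<bullet> (sample_excess_matrix w *v F w) \<partial>P)"
  proof (rule integral_mono_AE)
    show "integrable P (\<lambda>w. max c 0 * norm (F w) ^ 2 / (real CARD('n) * kernel_bound + rho)\<^sup>2)"
      using F_L2 by (simp add: norm_power2_vec)
    show "integrable P (\<lambda>w. F w \<bullet> (sample_excess_matrix w *v F w))"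
      by (rule integrable_sample_quadratic_form[OF measurable_sample_excess_matrix
          abs_excess_matrix_le F_meas F_L2(1)])
    show "AE w in P. max c 0 * norm (F w) ^ 2 / (real CARD('n) * kernel_bound + rho)\<^sup>2
        \<le> F w \<bullet> (sample_excess_matrix w *v F w)"
      using eig by eventually_elim (rule excess_matrix_quadratic_form_ge, blast)
  qed
  finally show ?thesis .
qed

lemma expectation_noisy_excess_ge:
  assumes [measurable]: "fstar \<in> borel_measurable borel" and fstar_L2: "integrable mu (\<lambda>x. (fstar x)\<^sup>2)"
    and eig: "AE w in P. \<forall>ev. mat_eigenvalue (gram_matrix mu (kperp_features (\<lambda>i. X i w))) ev \<longrightarrow> c \<le> ev"
  defines "Y \<equiv> \<lambda>w. \<chi> i. fstar (X i w) + xi i w"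
  shows "integrable P (\<lambda>w. Y w \<bullet> (sample_excess_matrix w *v Y w))"
    and "(max c 0 * (\<integral>x. (fstar x)\<^sup>2 \<partial>mu) + sigma\<^sup>2 * (\<integral>x. \<integral>y. (kperp lam act k x y)\<^sup>2 \<partial>mu \<partial>mu))
        * real CARD('n) / (real CARD('n) * kernel_bound + rho)\<^sup>2
      \<le> (\<integral>w. Y w \<bullet> (sample_excess_matrix w *v Y w) \<partial>P)"
proof -
  define F where "F w = (\<chi> i. fstar (X i w))" for w
  have Y_eq: "Y = (\<lambda>w. F w + (\<chi> i. xi i w))"
    by (simp add: Y_def F_def fun_eq_iff vec_eq_iff)
  have F_meas: "(\<lambda>w. F w $ a) \<in> borel_measurable sample_algebra" for a
    unfolding F_def using measurable_sample_algebra[of "\<lambda>xv. fstar (xv a)"] by simp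
  have F_L2: "integrable P (\<lambda>w. (F w $ a)\<^sup>2)" for a
    using fstar_L2 integrable_distr_eq[OF X_meas, of "\<lambda>x. (fstar x)\<^sup>2" a] by (simp add: F_def X_distr)
  note quadratic = expectation_noisy_quadratic_form[OF measurable_sample_excess_matrix abs_excess_matrix_le F_meas F_L2]
  show "integrable P (\<lambda>w. Y w \<bullet> (sample_excess_matrix w *v Y w))"
    unfolding Y_eq by (rule quadratic(1))
  have "(\<integral>w. Y w \<bullet> (sample_excess_matrix w *v Y w) \<partial>P)
      = (\<integral>w. F w \<bullet> (sample_excess_matrix w *v F w) \<partial>P) + sigma\<^sup>2 * (\<integral>w. trace (sample_excess_matrix w) \<partial>P)"
    unfolding Y_eq by (rule quadratic(2))
  moreover have "max c 0 * real CARD('n) * (\<integral>x. (fstar x)\<^sup>2 \<partial>mu) / (real CARD('n) * kernel_bound + rho)\<^sup>2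
      \<le> (\<integral>w. F w \<bullet> (sample_excess_matrix w *v F w) \<partial>P)"
    unfolding F_def by (rule expectation_fstar_form_ge[OF assms(1-3)])
  moreover have "sigma\<^sup>2 * (real CARD('n) * (\<integral>x. \<integral>y. (kperp lam act k x y)\<^sup>2 \<partial>mu \<partial>mu)
        / (real CARD('n) * kernel_bound + rho)\<^sup>2)
      \<le> sigma\<^sup>2 * (\<integral>w. trace (sample_excess_matrix w) \<partial>P)"
    by (intro mult_left_mono expectation_trace_sample_excess_ge) simp
  moreover have "(max c 0 * (\<integral>x. (fstar x)\<^sup>2 \<partial>mu) + sigma\<^sup>2 * (\<integral>x. \<integral>y. (kperp lam act k x y)\<^sup>2 \<partial>mu \<partial>mu))
        * real CARD('n) / (real CARD('n) * kernel_bound + rho)\<^sup>2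
      = max c 0 * real CARD('n) * (\<integral>x. (fstar x)\<^sup>2 \<partial>mu) / (real CARD('n) * kernel_bound + rho)\<^sup>2
        + sigma\<^sup>2 * (real CARD('n) * (\<integral>x. \<integral>y. (kperp lam act k x y)\<^sup>2 \<partial>mu \<partial>mu)
          / (real CARD('n) * kernel_bound + rho)\<^sup>2)"
    by (simp add: ring_distribs add_divide_distrib mult_ac)
  ultimately show "(max c 0 * (\<integral>x. (fstar x)\<^sup>2 \<partial>mu)
        + sigma\<^sup>2 * (\<integral>x. \<integral>y. (kperp lam act k x y)\<^sup>2 \<partial>mu \<partial>mu))
        * real CARD('n) / (real CARD('n) * kernel_bound + rho)\<^sup>2
      \<le> (\<integral>w. Y w \<bullet> (sample_excess_matrix w *v Y w) \<partial>P)"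
    by linarith
qed


lemma nn_integral_excess_risk_ge:
  fixes Q :: "'t measure" and f' :: "'w \<Rightarrow> 'x \<Rightarrow> real"
  assumes test: "noisy_test_point Q Xt xit mu sigma"
    and [measurable]: "fstar \<in> borel_measurable borel" and fstar_L2: "integrable mu (\<lambda>x. (fstar x)\<^sup>2)"
    and fstar_inv: "\<And>g. AE x in mu. fstar (act g x) = fstar x"
    and eig: "AE w in P. \<forall>ev. mat_eigenvalue (gram_matrix mu (kperp_features (\<lambda>i. X i w))) ev \<longrightarrow> c \<le> ev"
    and f'_risk: "\<And>w. w \<in> space P \<Longrightarrow> risk Q Xt xit fstar (f' w)
      \<le> risk Q Xt xit fstar (avg_op lam act (krr k rho (\<lambda>i. X i w) (\<lambda>i. fstar (X i w) + xi i w)))"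
  shows "ennreal ((max c 0 * (\<integral>x. (fstar x)\<^sup>2 \<partial>mu) + sigma\<^sup>2 * (\<integral>x. \<integral>y. (kperp lam act k x y)\<^sup>2 \<partial>mu \<partial>mu))
      * real CARD('n) / (real CARD('n) * kernel_bound + rho)\<^sup>2)
    \<le> (\<integral>\<^sup>+ w. ennreal (risk Q Xt xit fstar (krr k rho (\<lambda>i. X i w) (\<lambda>i. fstar (X i w) + xi i w))
      - risk Q Xt xit fstar (f' w)) \<partial>P)"
proof -
  define Y where "Y w = (\<chi> i. fstar (X i w) + xi i w)" for w
  note expectation = expectation_noisy_excess_ge[OF assms(2,3) eig]
  have "ennreal ((max c 0 * (\<integral>x. (fstar x)\<^sup>2 \<partial>mu) + sigma\<^sup>2 * (\<integral>x. \<integral>y. (kperp lam act k x y)\<^sup>2 \<partial>mu \<partial>mu))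
      * real CARD('n) / (real CARD('n) * kernel_bound + rho)\<^sup>2)
    \<le> ennreal (\<integral>w. Y w \<bullet> (sample_excess_matrix w *v Y w) \<partial>P)"
    using expectation(2) by (intro ennreal_leI) (simp add: Y_def)
  also have "\<dots> = (\<integral>\<^sup>+ w. ennreal (Y w \<bullet> (sample_excess_matrix w *v Y w)) \<partial>P)"
    using expectation(1) by (intro nn_integral_eq_integral[symmetric] AE_I2 excess_matrix_psd) (simp add: Y_def)
  also have "\<dots> \<le> (\<integral>\<^sup>+ w. ennreal (risk Q Xt xit fstar (krr k rho (\<lambda>i. X i w) (\<lambda>i. fstar (X i w) + xi i w))
      - risk Q Xt xit fstar (f' w)) \<partial>P)"
  proof (intro nn_integral_mono ennreal_leI)
    fix w assume "w \<in> space P"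
    with risk_krr_minus_risk_avg_op[OF test assms(2-4), of "\<lambda>i. X i w" "\<lambda>i. fstar (X i w) + xi i w"]
      f'_risk
    show "Y w \<bullet> (sample_excess_matrix w *v Y w)
      \<le> risk Q Xt xit fstar (krr k rho (\<lambda>i. X i w) (\<lambda>i. fstar (X i w) + xi i w)) - risk Q Xt xit fstar (f' w)"
      unfolding Y_def by fastforce
  qed
  finally show ?thesis .
qed

end

lemma divide_square_sqrt_rescale:
  fixes n :: real
  assumes "n > 0"
  shows "a / (sqrt n * M + rho / sqrt n)\<^sup>2 = a * n / (n * M + rho)\<^sup>2"
proof -
  have "n * M + rho = sqrt n * (sqrt n * M + rho / sqrt n)"
    using assms by (simp add: algebra_simps real_sqrt_mult[symmetric])
  then show ?thesis
    using assms by (simp add: power_mult_distrib)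
qed

theorem corollary5p4:
  fixes gmul :: "'g::{second_countable_topology,t2_space} \<Rightarrow> 'g \<Rightarrow> 'g"
    and e :: 'g and ginv :: "'g \<Rightarrow> 'g"
    and lam :: "'g measure"
    and act :: "'g \<Rightarrow> 'x::polish_space \<Rightarrow> 'x"
    and mu :: "'x measure"
    and k :: "'x \<Rightarrow> 'x \<Rightarrow> real"
    and P :: "'w measure"
    and X :: "'n::finite \<Rightarrow> 'w \<Rightarrow> 'x"
    and xi :: "'n \<Rightarrow> 'w \<Rightarrow> real"
    and fstar :: "'x \<Rightarrow> real"
    and sigma rho c :: real
    and Q :: "'t measure" and Xt :: "'t \<Rightarrow> 'x" and xit :: "'t \<Rightarrow> real"
    and f' :: "'w \<Rightarrow> 'x \<Rightarrow> real"
  assumes G: "compact_topological_group gmul e ginv"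
    and haar: "haar_probability lam gmul"
    and action: "measurable_group_action gmul e act"
    and mu_sets: "sets mu = sets borel" and mu_prob: "prob_space mu"
    and mu_inv: "\<forall>g. \<forall>A\<in>sets borel. emeasure mu (act g -` A) = emeasure mu A"
    and mu_supp: "\<forall>U. open U \<and> U \<noteq> {} \<longrightarrow> emeasure mu U > 0"
    and kernel: "pd_kernel k"
    and k_cont: "\<forall>x. continuous_on UNIV (\<lambda>y. k y x)"
    and k_bdd: "bdd_above (range (\<lambda>x. k x x))"
    and P_prob: "prob_space P"
    and X_meas: "\<forall>i. X i \<in> measurable P borel"
    and X_distr: "\<forall>i. distr P borel (X i) = mu"
    and X_indep: "prob_space.indep_vars P (\<lambda>_. borel) X UNIV"
    and fstar_L2: "fstar \<in> borel_measurable mu" "integrable mu (\<lambda>x. (fstar x)\<^sup>2)"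
    and fstar_inv: "\<forall>g. AE x in mu. fstar (act g x) = fstar x"
    and xi_meas: "\<forall>i. xi i \<in> borel_measurable P"
    and xi_L2: "\<forall>i. integrable P (\<lambda>w. (xi i w)\<^sup>2)"
    and xi_mean: "\<forall>i. AE w in P.
          real_cond_exp P (vimage_algebra (space P) (\<lambda>w i. X i w) (Pi\<^sub>M UNIV (\<lambda>_. borel))) (xi i) w = 0"
    and xi_cov: "\<forall>i j. AE w in P.
          real_cond_exp P (vimage_algebra (space P) (\<lambda>w i. X i w) (Pi\<^sub>M UNIV (\<lambda>_. borel)))
            (\<lambda>w. xi i w * xi j w) w = (if i = j then sigma\<^sup>2 else 0)"
    and Q_prob: "prob_space Q"
    and Xt_meas: "Xt \<in> measurable Q borel"
    and Xt_distr: "distr Q borel Xt = mu"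
    and xit_meas: "xit \<in> borel_measurable Q"
    and xit_L2: "integrable Q (\<lambda>t. (xit t)\<^sup>2)"
    and xit_mean: "AE t in Q. real_cond_exp Q (vimage_algebra (space Q) Xt borel) xit t = 0"
    and xit_var: "(\<integral>t. (xit t)\<^sup>2 \<partial>Q) = sigma\<^sup>2"
    and rho_pos: "rho > 0"
    and f'_L2: "\<forall>w\<in>space P. f' w \<in> borel_measurable mu \<and> integrable mu (\<lambda>x. (f' w x)\<^sup>2)"
    and f'_risk: "\<forall>w\<in>space P.
          risk Q Xt xit fstar (f' w)
          \<le> risk Q Xt xit fstar
               (avg_op lam act (krr k rho (\<lambda>i. X i w) (\<lambda>i. fstar (X i w) + xi i w)))"
    and eig: "AE w in P. \<forall>lam_ev. mat_eigenvalue
                 (\<chi> i j. \<integral>x. kperp lam act k (X i w) x * kperp lam act k (X j w) x \<partial>mu) lam_ev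
               \<longrightarrow> lam_ev \<ge> c"
  shows "ennreal (((\<integral>x. (fstar x)\<^sup>2 \<partial>mu) * c
              + sigma\<^sup>2 * (\<integral>x. \<integral>y. (kperp lam act k x y)\<^sup>2 \<partial>mu \<partial>mu))
            / (sqrt (real CARD('n)) * (SUP x. k x x) + rho / sqrt (real CARD('n)))\<^sup>2)
         \<le> (\<integral>\<^sup>+ w. ennreal
               (risk Q Xt xit fstar (krr k rho (\<lambda>i. X i w) (\<lambda>i. fstar (X i w) + xi i w))
                - risk Q Xt xit fstar (f' w)) \<partial>P)"
proof -
  interpret krr_sample gmul e ginv lam act mu k rho P X xi sigma
    unfolding krr_sample_def kernel_ridge_def kernel_ridge_axioms_def invariant_kernel_def
      invariant_kernel_axioms_def compact_haar_group_def noisy_sample_def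
    using assms by blast
  have test: "noisy_test_point Q Xt xit mu sigma"
    unfolding noisy_test_point_def using assms by blast
  have fstar_meas: "fstar \<in> borel_measurable borel"
    using fstar_L2(1) by (simp add: measurable_cong_sets[OF mu_sets refl])
  have gram: "(\<chi> i j. \<integral>x. kperp lam act k (X i w) x * kperp lam act k (X j w) x \<partial>mu)
      = gram_matrix mu (kperp_features (\<lambda>i. X i w))" for w
    by (simp add: gram_matrix_def kperp_features_def)
  have "0 \<le> (\<integral>x. (fstar x)\<^sup>2 \<partial>mu)"
    by (rule Bochner_Integration.integral_nonneg) simp
  from mult_right_mono[OF max.cobounded1 this, of c 0]
  have "((\<integral>x. (fstar x)\<^sup>2 \<partial>mu) * c + sigma\<^sup>2 * (\<integral>x. \<integral>y. (kperp lam act k x y)\<^sup>2 \<partial>mu \<partial>mu))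
      / (sqrt (real CARD('n)) * (SUP x. k x x) + rho / sqrt (real CARD('n)))\<^sup>2
    \<le> (max c 0 * (\<integral>x. (fstar x)\<^sup>2 \<partial>mu) + sigma\<^sup>2 * (\<integral>x. \<integral>y. (kperp lam act k x y)\<^sup>2 \<partial>mu \<partial>mu))
      * real CARD('n) / (real CARD('n) * kernel_bound + rho)\<^sup>2"
    unfolding divide_square_sqrt_rescale[OF of_nat_0_less_iff[THEN iffD2, OF zero_less_card_finite]]
    by (intro divide_right_mono mult_right_mono add_right_mono) (simp_all add: mult.commute)
  then show ?thesis
    using nn_integral_excess_risk_ge[OF test fstar_meas fstar_L2(2) fstar_inv[rule_format]
        eig[unfolded gram] f'_risk[rule_format]]
    by (rule order_trans[OF ennreal_leI])
qed

end
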